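(* Let $(G,E,\phi_c)$ be any twisted Exel–Pardo tuple. Then the canonical algebra homomorphism $L(E)\to L(G,E,\phi_c)$, sending $v\mapsto v$, $e\mapsto e$, $e^*\mapsto e^*$ for $v\in E^0$, $e\in E^1$, is injective.
   Context: $\ell$ is a commutative unital ring, $\mathcal U(\ell)$ its unit group. A twisted Exel–Pardo tuple $(G,E,\phi_c)$: a graph $E=(E^0,E^1,r,s)$, a group $G$ acting on $E$ by graph automorphisms, $\phi:G\times E^1\to G$ with $\phi(gh,e)=\phi(g,h(e))\phi(h,e)$ and $\phi(g,e)(v)=g(v)$ for $v\in E^0$, and $c:G\times E^1\to\mathcal U(\ell)$ with $c(gh,e)=c(g,h(e))c(h,e)$. A vertex $v$ is regular if $0<|s^{-1}(v)|<\infty$. $L(G,E,\phi_c)$ is the $\ell$-algebra generated by $e,e^*$ ($e\in E^1$), $vg$ ($v\in E^0,g\in G$), $v:=v1$, subject to $e=s(e)er(e)$, $e^*=r(e)e^*s(e)$, $e^*f=\delta_{e,f}r(e)$, $(vg)(wh)=\delta_{v,g(w)}v(gh)$, $(vg)e=\delta_{v,g(s(e))}c(g,e)g(e)(r(g(e))\phi(g,e))$, $e^*(vg)=\delta_{v,s(e)}c(g,g^{-1}(e))(r(e)\phi(g,g^{-1}(e)))(g^{-1}(e))^*$, and $v=\sum_{s(e)=v}ee^*$ for every regular $v$. $L(E)$ is the Leavitt path algebra of $E$ over $\ell$. *)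

theory Defs
  imports "HOL-Library.Poly_Mapping" "HOL-Algebra.Group"
begin

type_synonym ('x, 'l) falg = "'x list \<Rightarrow>\<^sub>0 'l"

definition fmul :: "('x, 'l::comm_ring_1) falg \<Rightarrow> ('x, 'l) falg \<Rightarrow> ('x, 'l) falg" where
  "fmul p q = (\<Sum>u\<in>Poly_Mapping.keys p. \<Sum>w\<in>Poly_Mapping.keys q. Poly_Mapping.single (u @ w) (Poly_Mapping.lookup p u * Poly_Mapping.lookup q w))"

definition fgen :: "'x \<Rightarrow> ('x, 'l::comm_ring_1) falg" where
  "fgen x = Poly_Mapping.single [x] 1"

definition fscal :: "'l::comm_ring_1 \<Rightarrow> ('x, 'l) falg \<Rightarrow> ('x, 'l) falg" where
  "fscal c p = fmul (Poly_Mapping.single [] c) p"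

definition fmap :: "('x \<Rightarrow> 'y) \<Rightarrow> ('x, 'l::comm_ring_1) falg \<Rightarrow> ('y, 'l) falg" where
  "fmap f p = (\<Sum>u\<in>Poly_Mapping.keys p. Poly_Mapping.single (map f u) (Poly_Mapping.lookup p u))"

inductive_set fideal :: "('x, 'l::comm_ring_1) falg set \<Rightarrow> ('x, 'l) falg set"
  for R :: "('x, 'l) falg set" where
  zero: "0 \<in> fideal R"
| base: "a \<in> R \<Longrightarrow> a \<in> fideal R"
| add: "a \<in> fideal R \<Longrightarrow> b \<in> fideal R \<Longrightarrow> a + b \<in> fideal R"
| mult: "a \<in> fideal R \<Longrightarrow> fmul (fmul x a) y \<in> fideal R"

text \<open>A graph is \<open>(V, E, r, s)\<close> with \<open>V = E\<^sup>0\<close>, \<open>E = E\<^sup>1\<close>.\<close>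
definition is_graph :: "'v set \<Rightarrow> 'e set \<Rightarrow> ('e \<Rightarrow> 'v) \<Rightarrow> ('e \<Rightarrow> 'v) \<Rightarrow> bool" where
  "is_graph V E r s \<longleftrightarrow> (\<forall>e\<in>E. r e \<in> V \<and> s e \<in> V)"

definition regular_vertex :: "'e set \<Rightarrow> ('e \<Rightarrow> 'v) \<Rightarrow> 'v \<Rightarrow> bool" where
  "regular_vertex E s v \<longleftrightarrow> finite {e\<in>E. s e = v} \<and> {e\<in>E. s e = v} \<noteq> {}"

datatype ('v, 'e) lgen = LV 'v | LE 'e | LS 'e   \<comment> \<open>vertex, edge, ghost edge \<open>e\<^sup>*\<close>\<close>

definition lgens :: "'v set \<Rightarrow> 'e set \<Rightarrow> ('v, 'e) lgen set" where
  "lgens V E = LV ` V \<union> LE ` E \<union> LS ` E"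

definition leavitt_rels ::
  "'v set \<Rightarrow> 'e set \<Rightarrow> ('e \<Rightarrow> 'v) \<Rightarrow> ('e \<Rightarrow> 'v) \<Rightarrow> (('v, 'e) lgen, 'l::comm_ring_1) falg set" where
  "leavitt_rels V E r s =
     {fmul (fgen (LV v)) (fgen (LV w)) - (if v = w then fgen (LV v) else 0) | v w. v \<in> V \<and> w \<in> V}
   \<union> {fmul (fgen (LV (s e))) (fgen (LE e)) - fgen (LE e) | e. e \<in> E}
   \<union> {fmul (fgen (LE e)) (fgen (LV (r e))) - fgen (LE e) | e. e \<in> E}
   \<union> {fmul (fgen (LV (r e))) (fgen (LS e)) - fgen (LS e) | e. e \<in> E}
   \<union> {fmul (fgen (LS e)) (fgen (LV (s e))) - fgen (LS e) | e. e \<in> E}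
   \<union> {fmul (fgen (LS e)) (fgen (LE f)) - (if e = f then fgen (LV (r e)) else 0) | e f. e \<in> E \<and> f \<in> E}
   \<union> {fgen (LV v) - (\<Sum>e\<in>{e\<in>E. s e = v}. fmul (fgen (LE e)) (fgen (LS e))) | v.
        v \<in> V \<and> regular_vertex E s v}"

definition twisted_EP_tuple ::
  "'g monoid \<Rightarrow> 'v set \<Rightarrow> 'e set \<Rightarrow> ('e \<Rightarrow> 'v) \<Rightarrow> ('e \<Rightarrow> 'v) \<Rightarrow>
   ('g \<Rightarrow> 'v \<Rightarrow> 'v) \<Rightarrow> ('g \<Rightarrow> 'e \<Rightarrow> 'e) \<Rightarrow> ('g \<Rightarrow> 'e \<Rightarrow> 'g) \<Rightarrow> ('g \<Rightarrow> 'e \<Rightarrow> 'l::comm_ring_1) \<Rightarrow> bool" where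
  "twisted_EP_tuple G V E r s av ae \<phi> c \<longleftrightarrow>
     group G \<and> is_graph V E r s \<and>
     \<comment> \<open>G acts on E by graph automorphisms\<close>
     (\<forall>g\<in>carrier G. bij_betw (av g) V V \<and> bij_betw (ae g) E E) \<and>
     (\<forall>v\<in>V. av \<one>\<^bsub>G\<^esub> v = v) \<and> (\<forall>e\<in>E. ae \<one>\<^bsub>G\<^esub> e = e) \<and>
     (\<forall>g\<in>carrier G. \<forall>h\<in>carrier G. \<forall>v\<in>V. av (g \<otimes>\<^bsub>G\<^esub> h) v = av g (av h v)) \<and>
     (\<forall>g\<in>carrier G. \<forall>h\<in>carrier G. \<forall>e\<in>E. ae (g \<otimes>\<^bsub>G\<^esub> h) e = ae g (ae h e)) \<and>
     (\<forall>g\<in>carrier G. \<forall>e\<in>E. s (ae g e) = av g (s e) \<and> r (ae g e) = av g (r e)) \<and>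
     \<comment> \<open>the cocycle phi\<close>
     (\<forall>g\<in>carrier G. \<forall>e\<in>E. \<phi> g e \<in> carrier G) \<and>
     (\<forall>g\<in>carrier G. \<forall>h\<in>carrier G. \<forall>e\<in>E.
        \<phi> (g \<otimes>\<^bsub>G\<^esub> h) e = \<phi> g (ae h e) \<otimes>\<^bsub>G\<^esub> \<phi> h e) \<and>
     (\<forall>g\<in>carrier G. \<forall>e\<in>E. \<forall>v\<in>V. av (\<phi> g e) v = av g v) \<and>
     \<comment> \<open>the unit-valued cocycle c\<close>
     (\<forall>g\<in>carrier G. \<forall>e\<in>E. c g e dvd 1) \<and>
     (\<forall>g\<in>carrier G. \<forall>h\<in>carrier G. \<forall>e\<in>E. c (g \<otimes>\<^bsub>G\<^esub> h) e = c g (ae h e) * c h e)"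

datatype ('v, 'e, 'g) ggen = GV 'v 'g | GE 'e | GS 'e   \<comment> \<open>\<open>vg\<close>, edge, ghost edge\<close>

definition ep_rels ::
  "'g monoid \<Rightarrow> 'v set \<Rightarrow> 'e set \<Rightarrow> ('e \<Rightarrow> 'v) \<Rightarrow> ('e \<Rightarrow> 'v) \<Rightarrow>
   ('g \<Rightarrow> 'v \<Rightarrow> 'v) \<Rightarrow> ('g \<Rightarrow> 'e \<Rightarrow> 'e) \<Rightarrow> ('g \<Rightarrow> 'e \<Rightarrow> 'g) \<Rightarrow> ('g \<Rightarrow> 'e \<Rightarrow> 'l::comm_ring_1) \<Rightarrow>
   (('v, 'e, 'g) ggen, 'l) falg set" where
  "ep_rels G V E r s av ae \<phi> c =
     {fgen (GE e) - fmul (fmul (fgen (GV (s e) \<one>\<^bsub>G\<^esub>)) (fgen (GE e))) (fgen (GV (r e) \<one>\<^bsub>G\<^esub>)) | e. e \<in> E}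
   \<union> {fgen (GS e) - fmul (fmul (fgen (GV (r e) \<one>\<^bsub>G\<^esub>)) (fgen (GS e))) (fgen (GV (s e) \<one>\<^bsub>G\<^esub>)) | e. e \<in> E}
   \<union> {fmul (fgen (GS e)) (fgen (GE f)) - (if e = f then fgen (GV (r e) \<one>\<^bsub>G\<^esub>) else 0) | e f. e \<in> E \<and> f \<in> E}
   \<union> {fmul (fgen (GV v g)) (fgen (GV w h)) - (if v = av g w then fgen (GV v (g \<otimes>\<^bsub>G\<^esub> h)) else 0) | v g w h.
        v \<in> V \<and> w \<in> V \<and> g \<in> carrier G \<and> h \<in> carrier G}
   \<union> {fmul (fgen (GV v g)) (fgen (GE e)) -
        (if v = av g (s e)
         then fscal (c g e) (fmul (fgen (GE (ae g e))) (fgen (GV (r (ae g e)) (\<phi> g e))))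
         else 0) | v g e. v \<in> V \<and> g \<in> carrier G \<and> e \<in> E}
   \<union> {fmul (fgen (GS e)) (fgen (GV v g)) -
        (if v = s e
         then fscal (c g (ae (inv\<^bsub>G\<^esub> g) e))
                (fmul (fgen (GV (r e) (\<phi> g (ae (inv\<^bsub>G\<^esub> g) e)))) (fgen (GS (ae (inv\<^bsub>G\<^esub> g) e))))
         else 0) | e v g. e \<in> E \<and> v \<in> V \<and> g \<in> carrier G}
   \<union> {fgen (GV v \<one>\<^bsub>G\<^esub>) - (\<Sum>e\<in>{e\<in>E. s e = v}. fmul (fgen (GE e)) (fgen (GS e))) | v.
        v \<in> V \<and> regular_vertex E s v}"

fun canon :: "'g monoid \<Rightarrow> ('v, 'e) lgen \<Rightarrow> ('v, 'e, 'g) ggen" where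
  "canon G (LV v) = GV v \<one>\<^bsub>G\<^esub>"
| "canon G (LE e) = GE e"
| "canon G (LS e) = GS e"

end

theory Submission
  imports Defs
begin

text \<open>The algebra \<open>L(G,E,\<phi>\<^sub>c)\<close> is represented on the free \<open>\<ell>\<close>-module \<open>M\<close> whose basis
  consists of the unit and the monomials \<open>\<alpha> (u g) \<beta>\<^sup>*\<close> with \<open>\<alpha>\<close> a path ending at \<open>u\<close>; the
  generators act by the multiplication rules of \<open>L(G,E,\<phi>\<^sub>c)\<close>. Every defining relation acts as
  zero except the Cuntz--Krieger relations, which map \<open>M\<close> into the span \<open>W\<close> of the defects
  \<open>\<alpha> (u - \<Sum>\<^sub>s\<^sub>(\<^sub>e\<^sub>)\<^sub>=\<^sub>u e e\<^sup>*) (u g) \<beta>\<^sup>*\<close>; so every element of the ideal of relations sends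
  the unit into \<open>W\<close>.

  Reading \<open>\<alpha> (u 1) \<beta>\<^sup>*\<close> as the Leavitt word \<open>\<alpha> u \<beta>\<^sup>*\<close> and discarding monomials with
  \<open>g \<noteq> 1\<close> gives a linear map \<open>\<psi>\<close> from \<open>M\<close> to the free algebra on the Leavitt generators with
  \<open>\<psi>(w \<cdot> 1) \<equiv> w\<close> modulo the Leavitt ideal for every Leavitt word \<open>w\<close>. An element of \<open>W\<close>
  supported on monomials with \<open>g = 1\<close> is a combination of defects with \<open>g = 1\<close> (compare shortest
  monomials), and \<open>\<psi>\<close> maps those defects into the Leavitt ideal. Hence
  \<open>p \<equiv> \<psi>(p \<cdot> 1) \<equiv> 0\<close> whenever the image of \<open>p\<close> lies in the ideal of relations.\<close>

definition pm_scale :: "'l::comm_ring_1 \<Rightarrow> ('a \<Rightarrow>\<^sub>0 'l) \<Rightarrow> ('a \<Rightarrow>\<^sub>0 'l)" where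
  "pm_scale a x = Poly_Mapping.map ((*) a) x"

lemma lookup_pm_scale [simp]: "Poly_Mapping.lookup (pm_scale a x) k = a * Poly_Mapping.lookup x k"
  by (simp add: pm_scale_def Poly_Mapping.map.rep_eq when_def)

lemma pm_scale_add_right: "pm_scale a (x + y) = pm_scale a x + pm_scale a y"
  by (rule poly_mapping_eqI) (simp add: lookup_add algebra_simps)

lemma pm_scale_add_left: "pm_scale (a + b) x = pm_scale a x + pm_scale b x"
  by (rule poly_mapping_eqI) (simp add: lookup_add algebra_simps)

lemma pm_scale_diff_right: "pm_scale a (x - y) = pm_scale a x - pm_scale a y"
  by (rule poly_mapping_eqI) (simp add: lookup_minus algebra_simps)

lemma pm_scale_scale [simp]: "pm_scale a (pm_scale b x) = pm_scale (a * b) x"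
  by (rule poly_mapping_eqI) (simp add: algebra_simps)

lemma pm_scale_zero_left [simp]: "pm_scale 0 x = 0"
  by (rule poly_mapping_eqI) simp

lemma pm_scale_one [simp]: "pm_scale 1 x = x"
  by (rule poly_mapping_eqI) simp

lemma pm_scale_zero_right [simp]: "pm_scale a 0 = 0"
  by (rule poly_mapping_eqI) simp

lemma pm_scale_minus_one: "pm_scale (-1) x = - x"
  by (rule poly_mapping_eqI) simp

lemma pm_scale_single [simp]: "pm_scale a (Poly_Mapping.single k b) = Poly_Mapping.single k (a * b)"
  by (rule poly_mapping_eqI) (simp add: lookup_single when_def)

lemma pm_scale_sum: "pm_scale a (sum f S) = (\<Sum>i\<in>S. pm_scale a (f i))"
  by (induction S rule: infinite_finite_induct) (auto simp: pm_scale_add_right)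

lemma keys_pm_scale: "Poly_Mapping.keys (pm_scale a x) \<subseteq> Poly_Mapping.keys x"
  by (auto simp: in_keys_iff)

lemma single_eq_single_iff:
  "Poly_Mapping.single a k = Poly_Mapping.single b l \<longleftrightarrow> k = l \<and> (k = 0 \<or> a = b)"
  by (metis lookup_single_eq lookup_single_not_eq single_zero)

text \<open>This generalises \<open>frag_extend\<close> of \<open>HOL-Library.Poly_Mapping\<close> from \<open>int\<close> to any
  commutative ring.\<close>

definition pm_extend :: "('a \<Rightarrow> 'b \<Rightarrow>\<^sub>0 'l::comm_ring_1) \<Rightarrow> ('a \<Rightarrow>\<^sub>0 'l) \<Rightarrow> ('b \<Rightarrow>\<^sub>0 'l)" where
  "pm_extend b x = (\<Sum>i\<in>Poly_Mapping.keys x. pm_scale (Poly_Mapping.lookup x i) (b i))"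

lemma pm_extend_superset:
  assumes "finite A" "Poly_Mapping.keys x \<subseteq> A"
  shows "pm_extend b x = (\<Sum>i\<in>A. pm_scale (Poly_Mapping.lookup x i) (b i))"
  unfolding pm_extend_def
  by (rule sum.mono_neutral_left) (use assms in \<open>auto simp: in_keys_iff\<close>)

lemma pm_extend_add: "pm_extend b (x + y) = pm_extend b x + pm_extend b y"
proof -
  let ?A = "Poly_Mapping.keys x \<union> Poly_Mapping.keys y"
  have "pm_extend b (x + y) = (\<Sum>i\<in>?A. pm_scale (Poly_Mapping.lookup (x + y) i) (b i))"
    by (rule pm_extend_superset) (auto dest: set_mp[OF keys_add])
  also have "\<dots> = (\<Sum>i\<in>?A. pm_scale (Poly_Mapping.lookup x i) (b i))
                 + (\<Sum>i\<in>?A. pm_scale (Poly_Mapping.lookup y i) (b i))"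
    by (simp add: lookup_add pm_scale_add_left sum.distrib)
  also have "\<dots> = pm_extend b x + pm_extend b y"
    by (simp add: pm_extend_superset[symmetric])
  finally show ?thesis .
qed

lemma pm_extend_scale: "pm_extend b (pm_scale a x) = pm_scale a (pm_extend b x)"
proof -
  have "pm_extend b (pm_scale a x) =
      (\<Sum>i\<in>Poly_Mapping.keys x. pm_scale (Poly_Mapping.lookup (pm_scale a x) i) (b i))"
    by (rule pm_extend_superset) (auto simp: keys_pm_scale)
  then show ?thesis by (simp add: pm_extend_def pm_scale_sum)
qed

lemma pm_extend_single [simp]: "pm_extend b (Poly_Mapping.single i a) = pm_scale a (b i)"
  by (cases "a = 0") (simp_all add: pm_extend_def)

lemma pm_extend_basis_add: "pm_extend (\<lambda>i. b1 i + b2 i) x = pm_extend b1 x + pm_extend b2 x"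
  by (simp add: pm_extend_def pm_scale_add_right sum.distrib)

lemma pm_extend_basis_diff: "pm_extend (\<lambda>i. b1 i - b2 i) x = pm_extend b1 x - pm_extend b2 x"
  by (simp add: pm_extend_def pm_scale_diff_right sum_subtractf)

lemma pm_extend_basis_scale: "pm_extend (\<lambda>i. pm_scale a (b i)) x = pm_scale a (pm_extend b x)"
  by (simp add: pm_extend_def pm_scale_sum mult.commute)

lemma pm_extend_single_basis [simp]: "pm_extend (\<lambda>i. Poly_Mapping.single i 1) x = x"
proof (rule poly_mapping_eqI)
  fix k
  have "Poly_Mapping.lookup (pm_extend (\<lambda>i. Poly_Mapping.single i 1) x) k =
      (\<Sum>i\<in>Poly_Mapping.keys x. if i = k then Poly_Mapping.lookup x i else 0)"
    by (simp add: pm_extend_def lookup_sum lookup_single when_def)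
  also have "\<dots> = Poly_Mapping.lookup x k"
    by (cases "k \<in> Poly_Mapping.keys x") (auto simp: in_keys_iff)
  finally show "Poly_Mapping.lookup (pm_extend (\<lambda>i. Poly_Mapping.single i 1) x) k =
      Poly_Mapping.lookup x k" .
qed

lemma keys_pm_extend:
  "Poly_Mapping.keys (pm_extend b x) \<subseteq> (\<Union>i\<in>Poly_Mapping.keys x. Poly_Mapping.keys (b i))"
  unfolding pm_extend_def using keys_sum keys_pm_scale by fastforce

definition pm_linear :: "(('a \<Rightarrow>\<^sub>0 'l::comm_ring_1) \<Rightarrow> ('b \<Rightarrow>\<^sub>0 'l)) \<Rightarrow> bool" where
  "pm_linear f \<longleftrightarrow> (\<forall>x y. f (x + y) = f x + f y) \<and> (\<forall>a x. f (pm_scale a x) = pm_scale a (f x))"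

lemma pm_linear_extend: "pm_linear (pm_extend b)"
  by (simp add: pm_linear_def pm_extend_add pm_extend_scale)

lemma pm_linear_add: "pm_linear f \<Longrightarrow> f (x + y) = f x + f y"
  by (simp add: pm_linear_def)

lemma pm_linear_scale: "pm_linear f \<Longrightarrow> f (pm_scale a x) = pm_scale a (f x)"
  by (simp add: pm_linear_def)

lemma pm_linear_zero: "pm_linear f \<Longrightarrow> f 0 = 0"
  using pm_linear_scale[of f 0 0] by simp

lemma pm_linear_diff: "pm_linear f \<Longrightarrow> f (x - y) = f x - f y"
  using pm_linear_add[of f x "- y"] pm_linear_scale[of f "-1" y] by (simp add: pm_scale_minus_one)

lemma pm_linear_sum: "pm_linear f \<Longrightarrow> f (sum g S) = (\<Sum>i\<in>S. f (g i))"
  by (induction S rule: infinite_finite_induct) (auto simp: pm_linear_zero pm_linear_add)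

lemma pm_linear_pm_extend: "pm_linear f \<Longrightarrow> f (pm_extend b x) = pm_extend (\<lambda>i. f (b i)) x"
  by (simp add: pm_extend_def pm_linear_sum pm_linear_scale)

lemma pm_linear_comp: "pm_linear f \<Longrightarrow> pm_linear g \<Longrightarrow> pm_linear (\<lambda>x. f (g x))"
  by (simp add: pm_linear_def)

lemma pm_linear_fun_diff: "pm_linear f \<Longrightarrow> pm_linear g \<Longrightarrow> pm_linear (\<lambda>x. f x - g x)"
  by (simp add: pm_linear_def pm_scale_diff_right algebra_simps)

lemma pm_linear_submodule_closed:
  assumes f: "pm_linear f" and "0 \<in> W" and add: "\<And>x y. x \<in> W \<Longrightarrow> y \<in> W \<Longrightarrow> x + y \<in> W"
    and scale: "\<And>a x. x \<in> W \<Longrightarrow> pm_scale a x \<in> W"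
    and basis: "\<And>t. t \<in> Poly_Mapping.keys n \<Longrightarrow> f (Poly_Mapping.single t 1) \<in> W"
  shows "f n \<in> W"
proof -
  have "f n = pm_extend (\<lambda>t. f (Poly_Mapping.single t 1)) n"
    using pm_linear_pm_extend[OF f, of "\<lambda>t. Poly_Mapping.single t 1" n] by simp
  also have "\<dots> \<in> W"
  proof -
    have "(\<Sum>i\<in>K. pm_scale (Poly_Mapping.lookup n i) (f (Poly_Mapping.single i 1))) \<in> W"
      if "K \<subseteq> Poly_Mapping.keys n" for K
      using that by (induction K rule: infinite_finite_induct) (auto intro: add scale basis \<open>0 \<in> W\<close>)
    then show ?thesis by (simp add: pm_extend_def)
  qed
  finally show ?thesis .
qed

lemma fmul_eq_pm_extend:
  "fmul p q = pm_extend (\<lambda>u. pm_extend (\<lambda>w. Poly_Mapping.single (u @ w) 1) q) p"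
  by (simp add: fmul_def pm_extend_def pm_scale_sum mult.commute)

lemma fmul_single_single [simp]:
  "fmul (Poly_Mapping.single u a) (Poly_Mapping.single w b) = Poly_Mapping.single (u @ w) (a * b)"
  by (simp add: fmul_eq_pm_extend mult.commute)

lemma pm_linear_fmul_left: "pm_linear (\<lambda>p. fmul p q)"
  unfolding fmul_eq_pm_extend by (rule pm_linear_extend)

lemma pm_linear_fmul_right: "pm_linear (\<lambda>q. fmul p q)"
  unfolding fmul_eq_pm_extend pm_linear_def
  by (simp add: pm_extend_add pm_extend_scale pm_extend_basis_add pm_extend_basis_scale)

lemma fmul_one_right [simp]: "fmul p (Poly_Mapping.single [] 1) = p"
  by (simp add: fmul_eq_pm_extend)

lemma fmul_scalar_left: "fmul (Poly_Mapping.single [] a) p = pm_scale a p"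
  by (simp add: fmul_eq_pm_extend)

lemma fscal_eq_pm_scale: "fscal a p = pm_scale a p"
  by (simp add: fscal_def fmul_scalar_left)

lemma fmap_eq_pm_extend: "fmap f p = pm_extend (\<lambda>u. Poly_Mapping.single (map f u) 1) p"
  by (simp add: fmap_def pm_extend_def)

lemma fmul_fgen_single: "fmul (fgen x) (Poly_Mapping.single u a) = Poly_Mapping.single (x # u) a"
  by (simp add: fgen_def)

lemma fmul_fgen_fgen: "fmul (fgen x) (fgen y) = Poly_Mapping.single [x, y] 1"
  by (simp add: fgen_def)

declare fideal.zero [simp]

lemma fideal_pm_scale: "a \<in> fideal R \<Longrightarrow> pm_scale k a \<in> fideal R"
  using fideal.mult[of a R "Poly_Mapping.single [] k" "Poly_Mapping.single [] 1"]
  by (simp add: fmul_scalar_left)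

lemma fideal_uminus_iff [simp]: "- a \<in> fideal R \<longleftrightarrow> a \<in> fideal R"
  using fideal_pm_scale[of _ R "-1"] by (metis minus_minus pm_scale_minus_one)

lemma fideal_diff: "a \<in> fideal R \<Longrightarrow> b \<in> fideal R \<Longrightarrow> a - b \<in> fideal R"
  using fideal.add[of a R "- b"] by simp

lemma fideal_sum: "(\<And>i. i \<in> S \<Longrightarrow> f i \<in> fideal R) \<Longrightarrow> sum f S \<in> fideal R"
  by (induction S rule: infinite_finite_induct) (auto intro: fideal.zero fideal.add)

lemma fideal_diff_trans: "a - b \<in> fideal R \<Longrightarrow> b - d \<in> fideal R \<Longrightarrow> a - d \<in> fideal R"
  using fideal.add[of "a - b" R "b - d"] by simp

lemma fideal_diff_sym: "a - b \<in> fideal R \<Longrightarrow> b - a \<in> fideal R"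
  using fideal_uminus_iff[of "a - b" R] by simp

lemma fideal_diff_mem: "a - b \<in> fideal R \<Longrightarrow> b \<in> fideal R \<Longrightarrow> a \<in> fideal R"
  using fideal.add[of "a - b" R b] by simp

definition sandwich :: "'x list \<Rightarrow> ('x, 'l::comm_ring_1) falg \<Rightarrow> 'x list \<Rightarrow> ('x, 'l) falg" where
  "sandwich A p B = fmul (fmul (Poly_Mapping.single A 1) p) (Poly_Mapping.single B 1)"

lemma sandwich_single [simp]:
  "sandwich A (Poly_Mapping.single w k) B = Poly_Mapping.single (A @ w @ B) k"
  by (simp add: sandwich_def)

lemma pm_linear_sandwich: "pm_linear (\<lambda>p. sandwich A p B)"
  unfolding sandwich_def by (rule pm_linear_comp[OF pm_linear_fmul_left pm_linear_fmul_right])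

lemma sandwich_in_fideal: "p \<in> R \<Longrightarrow> sandwich A p B \<in> fideal R"
  unfolding sandwich_def by (rule fideal.mult[OF fideal.base])

locale twisted_EP = group G for G :: "'g monoid" (structure) +
  fixes V :: "'v set" and E :: "'e set" and r s :: "'e \<Rightarrow> 'v"
    and av :: "'g \<Rightarrow> 'v \<Rightarrow> 'v" and ae :: "'g \<Rightarrow> 'e \<Rightarrow> 'e" and \<phi> :: "'g \<Rightarrow> 'e \<Rightarrow> 'g"
    and c :: "'g \<Rightarrow> 'e \<Rightarrow> 'l::comm_ring_1"
  assumes tuple: "twisted_EP_tuple G V E r s av ae \<phi> c"
begin

lemma r_closed [simp]: "e \<in> E \<Longrightarrow> r e \<in> V"
  using tuple by (auto simp: twisted_EP_tuple_def is_graph_def)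

lemma s_closed [simp]: "e \<in> E \<Longrightarrow> s e \<in> V"
  using tuple by (auto simp: twisted_EP_tuple_def is_graph_def)

lemma av_closed [simp]: "g \<in> carrier G \<Longrightarrow> v \<in> V \<Longrightarrow> av g v \<in> V"
  using tuple by (auto simp: twisted_EP_tuple_def intro: bij_betw_apply)

lemma ae_closed [simp]: "g \<in> carrier G \<Longrightarrow> e \<in> E \<Longrightarrow> ae g e \<in> E"
  using tuple by (auto simp: twisted_EP_tuple_def intro: bij_betw_apply)

lemma av_inj_iff: "g \<in> carrier G \<Longrightarrow> x \<in> V \<Longrightarrow> y \<in> V \<Longrightarrow> av g x = av g y \<longleftrightarrow> x = y"
  using tuple unfolding twisted_EP_tuple_def by (meson bij_betw_imp_inj_on inj_onD)

lemma av_one [simp]: "v \<in> V \<Longrightarrow> av \<one> v = v"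
  using tuple by (simp add: twisted_EP_tuple_def)

lemma ae_one [simp]: "e \<in> E \<Longrightarrow> ae \<one> e = e"
  using tuple by (simp add: twisted_EP_tuple_def)

lemma av_mult: "g \<in> carrier G \<Longrightarrow> h \<in> carrier G \<Longrightarrow> v \<in> V \<Longrightarrow> av (g \<otimes> h) v = av g (av h v)"
  using tuple by (simp add: twisted_EP_tuple_def)

lemma ae_mult: "g \<in> carrier G \<Longrightarrow> h \<in> carrier G \<Longrightarrow> e \<in> E \<Longrightarrow> ae (g \<otimes> h) e = ae g (ae h e)"
  using tuple by (simp add: twisted_EP_tuple_def)

lemma s_ae [simp]: "g \<in> carrier G \<Longrightarrow> e \<in> E \<Longrightarrow> s (ae g e) = av g (s e)"
  using tuple by (simp add: twisted_EP_tuple_def)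

lemma r_ae [simp]: "g \<in> carrier G \<Longrightarrow> e \<in> E \<Longrightarrow> r (ae g e) = av g (r e)"
  using tuple by (simp add: twisted_EP_tuple_def)

lemma phi_closed [simp]: "g \<in> carrier G \<Longrightarrow> e \<in> E \<Longrightarrow> \<phi> g e \<in> carrier G"
  using tuple by (simp add: twisted_EP_tuple_def)

lemma phi_mult:
  "g \<in> carrier G \<Longrightarrow> h \<in> carrier G \<Longrightarrow> e \<in> E \<Longrightarrow> \<phi> (g \<otimes> h) e = \<phi> g (ae h e) \<otimes> \<phi> h e"
  using tuple by (simp add: twisted_EP_tuple_def)

lemma av_phi [simp]: "g \<in> carrier G \<Longrightarrow> e \<in> E \<Longrightarrow> v \<in> V \<Longrightarrow> av (\<phi> g e) v = av g v"
  using tuple by (simp add: twisted_EP_tuple_def)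

lemma c_unit: "g \<in> carrier G \<Longrightarrow> e \<in> E \<Longrightarrow> c g e dvd 1"
  using tuple by (simp add: twisted_EP_tuple_def)

lemma c_mult: "g \<in> carrier G \<Longrightarrow> h \<in> carrier G \<Longrightarrow> e \<in> E \<Longrightarrow> c (g \<otimes> h) e = c g (ae h e) * c h e"
  using tuple by (simp add: twisted_EP_tuple_def)

lemma ae_inv_ae [simp]: "g \<in> carrier G \<Longrightarrow> e \<in> E \<Longrightarrow> ae (inv g) (ae g e) = e"
  by (metis ae_mult ae_one inv_closed l_inv)

lemma ae_ae_inv [simp]: "g \<in> carrier G \<Longrightarrow> e \<in> E \<Longrightarrow> ae g (ae (inv g) e) = e"
  by (metis ae_mult ae_one inv_closed r_inv)

lemma av_inv_av [simp]: "g \<in> carrier G \<Longrightarrow> v \<in> V \<Longrightarrow> av (inv g) (av g v) = v"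
  by (metis av_mult av_one inv_closed l_inv)

lemma av_av_inv [simp]: "g \<in> carrier G \<Longrightarrow> v \<in> V \<Longrightarrow> av g (av (inv g) v) = v"
  by (metis av_mult av_one inv_closed r_inv)

lemma phi_one [simp]: "e \<in> E \<Longrightarrow> \<phi> \<one> e = \<one>"
proof -
  assume e: "e \<in> E"
  have "\<phi> \<one> e \<otimes> \<phi> \<one> e = \<phi> \<one> e \<otimes> \<one>"
    using phi_mult[of \<one> \<one> e] e by simp
  then show ?thesis using e by (simp del: r_one)
qed

lemma c_one [simp]: "e \<in> E \<Longrightarrow> c \<one> e = 1"
proof -
  assume e: "e \<in> E"
  have idem: "c \<one> e * c \<one> e = c \<one> e" using c_mult[of \<one> \<one> e] e by simp
  obtain k where k: "1 = c \<one> e * k" using c_unit[of \<one> e] e by (auto elim: dvdE)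
  have "c \<one> e = c \<one> e * c \<one> e * k" using k by (simp add: mult.assoc)
  then show ?thesis using idem k by simp
qed

abbreviation out_edges :: "'v \<Rightarrow> 'e set" where
  "out_edges u \<equiv> {e \<in> E. s e = u}"

lemma bij_betw_ae_out_edges:
  assumes "m \<in> carrier G" "u \<in> V"
  shows "bij_betw (ae m) (out_edges u) (out_edges (av m u))"
proof (rule bij_betw_byWitness[where f' = "ae (inv m)"])
  show "ae (inv m) ` out_edges (av m u) \<subseteq> out_edges u"
  proof
    fix a assume "a \<in> ae (inv m) ` out_edges (av m u)"
    then obtain b where "b \<in> E" "s b = av m u" "a = ae (inv m) b" by blast
    then show "a \<in> out_edges u"
      using assms by (metis (mono_tags, lifting) av_inv_av ae_closed inv_closed mem_Collect_eq s_ae)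
  qed
qed (use assms in auto)

lemma regular_vertex_av:
  assumes "regular_vertex E s u" "h \<in> carrier G" "u \<in> V"
  shows "regular_vertex E s (av h u)"
proof -
  have "out_edges (av h u) = ae h ` out_edges u"
    using bij_betw_imp_surj_on[OF bij_betw_ae_out_edges[OF assms(2,3)]] by simp
  then show ?thesis using assms(1) unfolding regular_vertex_def by auto
qed

text \<open>A list \<open>\<alpha>\<close> of edges with \<open>path_to \<alpha> u\<close> is a path ending at the vertex \<open>u\<close>;
  \<open>path_source \<alpha> u\<close> is its source, which is \<open>u\<close> itself for the empty path.\<close>

fun path_source :: "'e list \<Rightarrow> 'v \<Rightarrow> 'v" where
  "path_source [] u = u"
| "path_source (e # al) u = s e"

fun path_to :: "'e list \<Rightarrow> 'v \<Rightarrow> bool" where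
  "path_to [] u = True"
| "path_to (e # al) u = (r e = path_source al u \<and> path_to al u)"

fun path_act :: "'g \<Rightarrow> 'e list \<Rightarrow> 'e list" where
  "path_act h [] = []"
| "path_act h (e # al) = ae h e # path_act (\<phi> h e) al"

fun path_phi :: "'g \<Rightarrow> 'e list \<Rightarrow> 'g" where
  "path_phi h [] = h"
| "path_phi h (e # al) = path_phi (\<phi> h e) al"

fun path_c :: "'g \<Rightarrow> 'e list \<Rightarrow> 'l" where
  "path_c h [] = 1"
| "path_c h (e # al) = c h e * path_c (\<phi> h e) al"

lemma path_act_closed: "set al \<subseteq> E \<Longrightarrow> h \<in> carrier G \<Longrightarrow> set (path_act h al) \<subseteq> E"
  by (induction al arbitrary: h) auto

lemma path_phi_closed [simp]: "set al \<subseteq> E \<Longrightarrow> h \<in> carrier G \<Longrightarrow> path_phi h al \<in> carrier G"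
  by (induction al arbitrary: h) auto

lemma av_path_phi [simp]:
  "set al \<subseteq> E \<Longrightarrow> h \<in> carrier G \<Longrightarrow> v \<in> V \<Longrightarrow> av (path_phi h al) v = av h v"
  by (induction al arbitrary: h) auto

lemma path_act_one [simp]: "set al \<subseteq> E \<Longrightarrow> path_act \<one> al = al"
  by (induction al) auto

lemma path_phi_one [simp]: "set al \<subseteq> E \<Longrightarrow> path_phi \<one> al = \<one>"
  by (induction al) auto

lemma path_c_one [simp]: "set al \<subseteq> E \<Longrightarrow> path_c \<one> al = 1"
  by (induction al) auto

lemma path_act_snoc: "path_act h (al @ [e]) = path_act h al @ [ae (path_phi h al) e]"
  by (induction al arbitrary: h) auto

lemma path_phi_snoc: "path_phi h (al @ [e]) = \<phi> (path_phi h al) e"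
  by (induction al arbitrary: h) auto

lemma path_c_snoc: "path_c h (al @ [e]) = path_c h al * c (path_phi h al) e"
  by (induction al arbitrary: h) (auto simp: mult.assoc)

lemma path_act_mult: "set al \<subseteq> E \<Longrightarrow> g \<in> carrier G \<Longrightarrow> h \<in> carrier G \<Longrightarrow>
    path_act (g \<otimes> h) al = path_act g (path_act h al)"
  by (induction al arbitrary: g h) (auto simp: ae_mult phi_mult)

lemma path_phi_mult: "set al \<subseteq> E \<Longrightarrow> g \<in> carrier G \<Longrightarrow> h \<in> carrier G \<Longrightarrow>
    path_phi (g \<otimes> h) al = path_phi g (path_act h al) \<otimes> path_phi h al"
  by (induction al arbitrary: g h) (auto simp: phi_mult)

lemma path_c_mult: "set al \<subseteq> E \<Longrightarrow> g \<in> carrier G \<Longrightarrow> h \<in> carrier G \<Longrightarrow>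
    path_c (g \<otimes> h) al = path_c g (path_act h al) * path_c h al"
  by (induction al arbitrary: g h) (auto simp: phi_mult c_mult algebra_simps)

lemma path_source_closed [simp]: "set al \<subseteq> E \<Longrightarrow> u \<in> V \<Longrightarrow> path_source al u \<in> V"
  by (cases al) auto

lemma path_source_path_act: "set al \<subseteq> E \<Longrightarrow> h \<in> carrier G \<Longrightarrow> u \<in> V \<Longrightarrow>
    path_source (path_act h al) (av h u) = av h (path_source al u)"
  by (cases al) auto

lemma path_to_path_act:
  "set al \<subseteq> E \<Longrightarrow> h \<in> carrier G \<Longrightarrow> u \<in> V \<Longrightarrow> path_to al u \<Longrightarrow> path_to (path_act h al) (av h u)"
proof (induction al arbitrary: h)
  case (Cons e al)
  then have e: "e \<in> E" and al: "set al \<subseteq> E" and ph: "\<phi> h e \<in> carrier G" by auto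
  have "path_to (path_act (\<phi> h e) al) (av (\<phi> h e) u)"
    using Cons.IH[OF al ph] Cons.prems by simp
  moreover have "path_source (path_act (\<phi> h e) al) (av (\<phi> h e) u) = av (\<phi> h e) (path_source al u)"
    using al ph Cons.prems by (intro path_source_path_act) auto
  ultimately show ?case using Cons.prems e al by simp
qed simp

end

subsection \<open>A representation of the free algebra on the generators of \<open>L(G,E,\<phi>\<^sub>c)\<close>\<close>

text \<open>\<open>Mon \<alpha> u g \<beta>\<close> stands for the monomial \<open>\<alpha> (u g) \<beta>\<^sup>*\<close> of \<open>L(G,E,\<phi>\<^sub>c)\<close> and \<open>Mon_one\<close>
  for its unit; the generators act on these by the multiplication rules of the algebra.\<close>

datatype ('v, 'e, 'g) mono = Mon_one | Mon "'e list" 'v 'g "'e list"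

context twisted_EP
begin

fun wf_mono :: "('v, 'e, 'g) mono \<Rightarrow> bool" where
  "wf_mono Mon_one = True"
| "wf_mono (Mon al u g be) = (set al \<subseteq> E \<and> set be \<subseteq> E \<and> u \<in> V \<and> g \<in> carrier G \<and> path_to al u)"

fun gen_step :: "('v, 'e, 'g) ggen \<Rightarrow> ('v, 'e, 'g) mono \<Rightarrow> ('v, 'e, 'g) mono \<times> 'l" where
  "gen_step (GV v h) Mon_one = (if v \<in> V \<and> h \<in> carrier G then (Mon [] v h [], 1) else (Mon_one, 0))"
| "gen_step (GV v h) (Mon al u g be) =
    (if v \<in> V \<and> h \<in> carrier G \<and> v = av h (path_source al u)
     then (Mon (path_act h al) (av h u) (path_phi h al \<otimes> g) be, path_c h al) else (Mon_one, 0))"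
| "gen_step (GE e) Mon_one = (if e \<in> E then (Mon [e] (r e) \<one> [], 1) else (Mon_one, 0))"
| "gen_step (GE e) (Mon al u g be) =
    (if e \<in> E \<and> r e = path_source al u then (Mon (e # al) u g be, 1) else (Mon_one, 0))"
| "gen_step (GS e) Mon_one = (if e \<in> E then (Mon [] (r e) \<one> [e], 1) else (Mon_one, 0))"
| "gen_step (GS e) (Mon [] u g be) =
    (if e \<in> E \<and> u = s e
     then (Mon [] (r e) (\<phi> g (ae (inv g) e)) (ae (inv g) e # be), c g (ae (inv g) e))
     else (Mon_one, 0))"
| "gen_step (GS e) (Mon (a # al) u g be) =
    (if e \<in> E \<and> e = a then (Mon al u g be, 1) else (Mon_one, 0))"

definition gen_act :: "('v, 'e, 'g) ggen \<Rightarrow> (('v, 'e, 'g) mono \<Rightarrow>\<^sub>0 'l) \<Rightarrow> (('v, 'e, 'g) mono \<Rightarrow>\<^sub>0 'l)" where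
  "gen_act x = pm_extend (\<lambda>t. Poly_Mapping.single (fst (gen_step x t)) (snd (gen_step x t)))"

fun word_act :: "('v, 'e, 'g) ggen list \<Rightarrow> (('v, 'e, 'g) mono \<Rightarrow>\<^sub>0 'l) \<Rightarrow> (('v, 'e, 'g) mono \<Rightarrow>\<^sub>0 'l)" where
  "word_act [] n = n"
| "word_act (x # u) n = gen_act x (word_act u n)"

definition falg_act ::
  "(('v, 'e, 'g) ggen, 'l) falg \<Rightarrow> (('v, 'e, 'g) mono \<Rightarrow>\<^sub>0 'l) \<Rightarrow> (('v, 'e, 'g) mono \<Rightarrow>\<^sub>0 'l)" where
  "falg_act p n = pm_extend (\<lambda>u. word_act u n) p"

lemma gen_act_single [simp]:
  "gen_act x (Poly_Mapping.single t a) = Poly_Mapping.single (fst (gen_step x t)) (a * snd (gen_step x t))"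
  by (simp add: gen_act_def)

lemma pm_linear_gen_act: "pm_linear (gen_act x)"
  unfolding gen_act_def by (rule pm_linear_extend)

lemma gen_act_zero [simp]: "gen_act x 0 = 0"
  by (rule pm_linear_zero[OF pm_linear_gen_act])

lemma gen_act_diff: "gen_act x (a - b) = gen_act x a - gen_act x b"
  by (rule pm_linear_diff[OF pm_linear_gen_act])

lemma gen_act_sum: "gen_act x (sum f S) = (\<Sum>i\<in>S. gen_act x (f i))"
  by (rule pm_linear_sum[OF pm_linear_gen_act])

lemma keys_gen_act:
  assumes "t' \<in> Poly_Mapping.keys (gen_act x n)"
  obtains t where "t \<in> Poly_Mapping.keys n" "t' = fst (gen_step x t)" "snd (gen_step x t) \<noteq> 0"
proof -
  obtain t where "t \<in> Poly_Mapping.keys n"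
    and "t' \<in> Poly_Mapping.keys (Poly_Mapping.single (fst (gen_step x t)) (snd (gen_step x t)))"
    using subsetD[OF keys_pm_extend assms[unfolded gen_act_def]] by blast
  then show ?thesis
    using that by (cases "snd (gen_step x t) = 0") auto
qed

lemma pm_linear_word_act: "pm_linear (word_act u)"
proof (induction u)
  case Nil
  then show ?case by (simp add: pm_linear_def)
next
  case (Cons x u)
  have "pm_linear (\<lambda>n. gen_act x (word_act u n))"
    by (rule pm_linear_comp[OF pm_linear_gen_act Cons])
  then show ?case by (simp add: pm_linear_def)
qed

lemma word_act_append: "word_act (u @ w) n = word_act u (word_act w n)"
  by (induction u) auto

lemma pm_linear_falg_act_left: "pm_linear (\<lambda>p. falg_act p n)"
  unfolding falg_act_def by (rule pm_linear_extend)

lemma pm_linear_falg_act: "pm_linear (falg_act p)"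
  unfolding falg_act_def pm_linear_def
  by (simp add: pm_linear_add[OF pm_linear_word_act] pm_linear_scale[OF pm_linear_word_act]
      pm_extend_basis_add pm_extend_basis_scale)

lemma falg_act_fmul: "falg_act (fmul p q) n = falg_act p (falg_act q n)"
proof -
  have "falg_act (fmul p q) n =
      pm_extend (\<lambda>u. pm_extend (\<lambda>u'. word_act u' n) (pm_extend (\<lambda>w. Poly_Mapping.single (u @ w) 1) q)) p"
    unfolding falg_act_def fmul_eq_pm_extend by (rule pm_linear_pm_extend[OF pm_linear_extend])
  also have "\<dots> = pm_extend (\<lambda>u. pm_extend (\<lambda>w. word_act (u @ w) n) q) p"
    by (simp add: pm_linear_pm_extend[OF pm_linear_extend])
  also have "\<dots> = pm_extend (\<lambda>u. word_act u (pm_extend (\<lambda>w. word_act w n) q)) p"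
    by (simp add: pm_linear_pm_extend[OF pm_linear_word_act] word_act_append)
  finally show ?thesis by (simp add: falg_act_def)
qed

lemma falg_act_fgen [simp]: "falg_act (fgen x) n = gen_act x n"
  by (simp add: falg_act_def fgen_def)

lemma falg_act_add: "falg_act (p + q) n = falg_act p n + falg_act q n"
  by (rule pm_linear_add[OF pm_linear_falg_act_left])

lemma falg_act_diff: "falg_act (p - q) n = falg_act p n - falg_act q n"
  by (rule pm_linear_diff[OF pm_linear_falg_act_left])

lemma falg_act_zero [simp]: "falg_act 0 n = 0"
  by (rule pm_linear_zero[OF pm_linear_falg_act_left])

lemma falg_act_sum: "falg_act (sum f S) n = (\<Sum>i\<in>S. falg_act (f i) n)"
  by (rule pm_linear_sum[OF pm_linear_falg_act_left])

lemma falg_act_fscal: "falg_act (fscal a p) n = pm_scale a (falg_act p n)"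
  by (simp add: fscal_eq_pm_scale pm_linear_scale[OF pm_linear_falg_act_left])

lemma falg_act_fmap_canon:
  "falg_act (fmap (canon G) p) n = pm_extend (\<lambda>u. word_act (map (canon G) u) n) p"
  unfolding falg_act_def fmap_eq_pm_extend by (simp add: pm_linear_pm_extend[OF pm_linear_extend])

definition wf_vec :: "(('v, 'e, 'g) mono \<Rightarrow>\<^sub>0 'l) \<Rightarrow> bool" where
  "wf_vec n \<longleftrightarrow> (\<forall>t\<in>Poly_Mapping.keys n. wf_mono t)"

lemma wf_mono_gen_step:
  assumes "wf_mono t" "snd (gen_step x t) \<noteq> 0"
  shows "wf_mono (fst (gen_step x t))"
proof (cases t)
  case (Mon al u g be)
  show ?thesis
  proof (cases x)
    case GV
    with assms Mon show ?thesis by (auto simp: path_act_closed path_to_path_act split: if_splits)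
  next
    case GE
    with assms Mon show ?thesis by (auto split: if_splits)
  next
    case GS
    with assms Mon show ?thesis by (cases al) (auto split: if_splits)
  qed
qed (use assms in \<open>cases x; auto split: if_splits\<close>)

lemma wf_vec_gen_act: "wf_vec n \<Longrightarrow> wf_vec (gen_act x n)"
  unfolding wf_vec_def by (metis keys_gen_act wf_mono_gen_step)

lemma wf_vec_word_act: "wf_vec n \<Longrightarrow> wf_vec (word_act u n)"
  by (induction u) (auto simp: wf_vec_gen_act)

lemma wf_vec_falg_act: "wf_vec n \<Longrightarrow> wf_vec (falg_act p n)"
  unfolding wf_vec_def falg_act_def
  using keys_pm_extend wf_vec_word_act[unfolded wf_vec_def] by fastforce

lemma falg_act_edge_rel:
  assumes "e \<in> E" "wf_mono t"
  shows "falg_act (fgen (GE e) - fmul (fmul (fgen (GV (s e) \<one>)) (fgen (GE e))) (fgen (GV (r e) \<one>)))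
           (Poly_Mapping.single t 1) = 0"
  using assms by (cases t) (simp_all add: falg_act_diff falg_act_fmul single_eq_single_iff)

lemma falg_act_ghost_rel:
  assumes "e \<in> E" "wf_mono t"
  shows "falg_act (fgen (GS e) - fmul (fmul (fgen (GV (r e) \<one>)) (fgen (GS e))) (fgen (GV (s e) \<one>)))
           (Poly_Mapping.single t 1) = 0"
proof (cases t)
  case (Mon al u g be)
  with assms show ?thesis
    by (cases al) (auto simp: falg_act_diff falg_act_fmul single_eq_single_iff)
qed (use assms in \<open>simp add: falg_act_diff falg_act_fmul\<close>)

lemma falg_act_ghost_edge_rel:
  assumes "e \<in> E" "f \<in> E" "wf_mono t"
  shows "falg_act (fmul (fgen (GS e)) (fgen (GE f)) - (if e = f then fgen (GV (r e) \<one>) else 0))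
           (Poly_Mapping.single t 1) = 0"
proof (cases t)
  case (Mon al u g be)
  with assms show ?thesis
    by (cases al) (auto simp: falg_act_diff falg_act_fmul single_eq_single_iff)
qed (use assms in \<open>simp add: falg_act_diff falg_act_fmul\<close>)

lemma falg_act_vertex_vertex_rel:
  assumes "v \<in> V" "w \<in> V" "g \<in> carrier G" "h \<in> carrier G" "wf_mono t"
  shows "falg_act (fmul (fgen (GV v g)) (fgen (GV w h)) - (if v = av g w then fgen (GV v (g \<otimes> h)) else 0))
           (Poly_Mapping.single t 1) = 0"
proof (cases t)
  case (Mon al u k be)
  with assms show ?thesis
    by (auto simp: falg_act_diff falg_act_fmul single_eq_single_iff path_act_mult path_phi_mult
        path_c_mult path_source_path_act av_mult m_assoc path_act_closed mult.commute av_inj_iff)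
qed (use assms in \<open>simp add: falg_act_diff falg_act_fmul\<close>)

lemma falg_act_vertex_edge_rel:
  assumes "v \<in> V" "g \<in> carrier G" "e \<in> E" "wf_mono t"
  shows "falg_act (fmul (fgen (GV v g)) (fgen (GE e)) -
        (if v = av g (s e)
         then fscal (c g e) (fmul (fgen (GE (ae g e))) (fgen (GV (r (ae g e)) (\<phi> g e))))
         else 0)) (Poly_Mapping.single t 1) = 0"
proof (cases t)
  case (Mon al u k be)
  with assms show ?thesis
    by (cases al) (auto simp: falg_act_diff falg_act_fmul falg_act_fscal single_eq_single_iff
        av_inj_iff path_act_closed)
qed (use assms in \<open>simp add: falg_act_diff falg_act_fmul falg_act_fscal\<close>)

lemma falg_act_ghost_vertex_rel:
  assumes "e \<in> E" "v \<in> V" "g \<in> carrier G" "wf_mono t"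
  shows "falg_act (fmul (fgen (GS e)) (fgen (GV v g)) -
        (if v = s e
         then fscal (c g (ae (inv g) e))
                (fmul (fgen (GV (r e) (\<phi> g (ae (inv g) e)))) (fgen (GS (ae (inv g) e))))
         else 0)) (Poly_Mapping.single t 1) = 0"
proof (cases t)
  case (Mon al u k be)
  show ?thesis
  proof (cases al)
    case Nil
    with assms Mon show ?thesis
      by (simp add: falg_act_diff falg_act_fmul falg_act_fscal single_eq_single_iff m_assoc
          ae_mult phi_mult c_mult inv_mult_group)
  next
    case (Cons a al')
    have "e = ae g a \<longleftrightarrow> ae (inv g) e = a" using assms Mon Cons by auto
    with assms Mon Cons show ?thesis
      by (cases "e = ae g a")
        (simp_all add: falg_act_diff falg_act_fmul falg_act_fscal single_eq_single_iff)
  qed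
qed (use assms in \<open>simp add: falg_act_diff falg_act_fmul falg_act_fscal\<close>)

subsection \<open>The Cuntz--Krieger defects\<close>

text \<open>\<open>ck_vec (Mon \<alpha> u g \<beta>)\<close> is \<open>\<alpha> (u - \<Sum>\<^sub>s\<^sub>(\<^sub>e\<^sub>)\<^sub>=\<^sub>u e e\<^sup>*) (u g) \<beta>\<^sup>*\<close> written in
  monomials: \<open>e\<^sup>* (u g) = c(g, g\<inverse>e) (r(e) \<phi>(g, g\<inverse>e)) (g\<inverse>e)\<^sup>*\<close>.\<close>

definition ck_tail :: "'e list \<Rightarrow> 'g \<Rightarrow> 'e list \<Rightarrow> 'e \<Rightarrow> ('v, 'e, 'g) mono" where
  "ck_tail al g be e = Mon (al @ [e]) (r e) (\<phi> g (ae (inv g) e)) (ae (inv g) e # be)"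

fun ck_vec :: "('v, 'e, 'g) mono \<Rightarrow> (('v, 'e, 'g) mono \<Rightarrow>\<^sub>0 'l)" where
  "ck_vec Mon_one = 0"
| "ck_vec (Mon al u g be) = Poly_Mapping.single (Mon al u g be) 1 -
     (\<Sum>e\<in>out_edges u. Poly_Mapping.single (ck_tail al g be e) (c g (ae (inv g) e)))"

declare ck_vec.simps [simp del]

fun ck_mono :: "('v, 'e, 'g) mono \<Rightarrow> bool" where
  "ck_mono Mon_one = False"
| "ck_mono (Mon al u g be) = (wf_mono (Mon al u g be) \<and> regular_vertex E s u)"

inductive_set ck_span :: "(('v, 'e, 'g) mono \<Rightarrow>\<^sub>0 'l) set" where
  zero: "0 \<in> ck_span"
| ck_vec: "ck_mono t \<Longrightarrow> pm_scale a (ck_vec t) \<in> ck_span"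
| add: "x \<in> ck_span \<Longrightarrow> y \<in> ck_span \<Longrightarrow> x + y \<in> ck_span"

lemma ck_span_scale: "x \<in> ck_span \<Longrightarrow> pm_scale a x \<in> ck_span"
  by (induction rule: ck_span.induct) (auto simp: pm_scale_add_right intro: ck_span.intros)

lemma ck_vec_in_ck_span: "ck_mono t \<Longrightarrow> ck_vec t \<in> ck_span"
  using ck_span.ck_vec[of t 1] by simp

lemma ck_span_sum: "(\<And>i. i \<in> S \<Longrightarrow> f i \<in> ck_span) \<Longrightarrow> sum f S \<in> ck_span"
  by (induction S rule: infinite_finite_induct) (auto intro: ck_span.intros)

lemma pm_linear_ck_span_closed:
  assumes "pm_linear f" "\<And>t. ck_mono t \<Longrightarrow> f (ck_vec t) \<in> ck_span" "x \<in> ck_span"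
  shows "f x \<in> ck_span"
  using assms(3)
  by induction (auto simp: pm_linear_zero[OF assms(1)] pm_linear_scale[OF assms(1)]
      pm_linear_add[OF assms(1)] assms(2) ck_span_scale intro: ck_span.intros)

lemma finite_out_edges: "regular_vertex E s u \<Longrightarrow> finite (out_edges u)"
  by (simp add: regular_vertex_def)

lemma path_source_ck_tail: "e \<in> out_edges u \<Longrightarrow> path_source (al @ [e]) (r e) = path_source al u"
  by (cases al) auto

lemma gen_act_GE_ck_vec:
  "gen_act (GE e) (ck_vec (Mon al u g be)) =
    (if e \<in> E \<and> r e = path_source al u then ck_vec (Mon (e # al) u g be) else 0)"
proof -
  have "gen_act (GE e) (Poly_Mapping.single (ck_tail al g be e') (c g (ae (inv g) e'))) =
     (if e \<in> E \<and> r e = path_source al u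
      then Poly_Mapping.single (ck_tail (e # al) g be e') (c g (ae (inv g) e')) else 0)"
    if "e' \<in> out_edges u" for e'
    using that by (simp add: ck_tail_def path_source_ck_tail)
  then show ?thesis
    by (auto simp: ck_vec.simps gen_act_diff gen_act_sum intro: sum.neutral)
qed

text \<open>For the empty path the leading monomial and the tail at \<open>e\<close> have the same image, so
  they cancel.\<close>

lemma gen_act_GS_ck_vec_Nil:
  assumes "ck_mono (Mon [] u g be)"
  shows "gen_act (GS e) (ck_vec (Mon [] u g be)) = 0"
proof -
  let ?X = "\<lambda>e'. Poly_Mapping.single (Mon [] (r e') (\<phi> g (ae (inv g) e')) (ae (inv g) e' # be))
                  (c g (ae (inv g) e'))"
  have "(\<Sum>e'\<in>out_edges u. gen_act (GS e) (Poly_Mapping.single (ck_tail [] g be e') (c g (ae (inv g) e')))) =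
      (\<Sum>e'\<in>out_edges u. if e' = e then ?X e' else 0)"
    by (rule sum.cong) (auto simp: ck_tail_def)
  also have "\<dots> = (if e \<in> out_edges u then ?X e else 0)"
    using finite_out_edges[of u] assms by (simp add: sum.delta)
  finally show ?thesis
    by (auto simp: ck_vec.simps gen_act_diff gen_act_sum)
qed

lemma gen_act_GS_ck_vec_Cons:
  assumes "ck_mono (Mon (a # al) u g be)"
  shows "gen_act (GS e) (ck_vec (Mon (a # al) u g be)) =
    (if e \<in> E \<and> e = a then ck_vec (Mon al u g be) else 0)"
proof -
  have "gen_act (GS e) (Poly_Mapping.single (ck_tail (a # al) g be e') (c g (ae (inv g) e'))) =
     (if e \<in> E \<and> e = a then Poly_Mapping.single (ck_tail al g be e') (c g (ae (inv g) e')) else 0)"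
    if "e' \<in> out_edges u" for e'
    using that assms by (auto simp: ck_tail_def)
  then show ?thesis
    by (auto simp: ck_vec.simps gen_act_diff gen_act_sum intro: sum.neutral)
qed

text \<open>This is where the cocycle identities enter: with \<open>m = \<phi>(h, \<alpha>)\<close>, the tail of \<open>\<alpha>\<close> at
  \<open>e\<close> is sent to the tail of \<open>h \<cdot> \<alpha>\<close> at \<open>m \<cdot> e\<close>.\<close>

lemma gen_act_GV_ck_tail:
  assumes h: "h \<in> carrier G" and g: "g \<in> carrier G" and al: "set al \<subseteq> E"
    and a: "a \<in> out_edges u" and v: "v \<in> V" "v = av h (path_source al u)"
  defines "m \<equiv> path_phi h al"
  shows "gen_act (GV v h) (Poly_Mapping.single (ck_tail al g be a) (c g (ae (inv g) a))) =
    Poly_Mapping.single (ck_tail (path_act h al) (m \<otimes> g) be (ae m a))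
      (path_c h al * c (m \<otimes> g) (ae (inv (m \<otimes> g)) (ae m a)))"
proof -
  have m: "m \<in> carrier G" using al h by (simp add: m_def)
  have aE: "a \<in> E" using a by simp
  have "ae (inv (m \<otimes> g)) (ae m a) = ae (inv g) a"
    using m g aE by (simp add: inv_mult_group ae_mult)
  moreover have "\<phi> (m \<otimes> g) (ae (inv g) a) = \<phi> m a \<otimes> \<phi> g (ae (inv g) a)"
    using m g aE by (simp add: phi_mult)
  moreover have "c (m \<otimes> g) (ae (inv g) a) = c m a * c g (ae (inv g) a)"
    using m g aE by (simp add: c_mult)
  moreover have "r (ae m a) = av h (r a)" using m aE al h by (simp add: m_def)
  ultimately show ?thesis
    using a v h by (simp add: ck_tail_def path_source_ck_tail path_act_snoc path_phi_snoc
        path_c_snoc m_def algebra_simps)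
qed

lemma gen_act_GV_ck_vec:
  assumes "ck_mono (Mon al u g be)"
  shows "gen_act (GV v h) (ck_vec (Mon al u g be)) =
    (if v \<in> V \<and> h \<in> carrier G \<and> v = av h (path_source al u)
     then pm_scale (path_c h al) (ck_vec (Mon (path_act h al) (av h u) (path_phi h al \<otimes> g) be))
     else 0)"
proof (cases "v \<in> V \<and> h \<in> carrier G \<and> v = av h (path_source al u)")
  case False
  have "gen_act (GV v h) (Poly_Mapping.single (ck_tail al g be e') (c g (ae (inv g) e'))) = 0"
    if "e' \<in> out_edges u" for e'
    using that False by (auto simp: ck_tail_def path_source_ck_tail)
  then show ?thesis using False
    by (auto simp: ck_vec.simps gen_act_diff gen_act_sum intro: sum.neutral)
next
  case True
  then have v: "v \<in> V" "v = av h (path_source al u)" and h: "h \<in> carrier G" by auto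
  have al: "set al \<subseteq> E" and u: "u \<in> V" and g: "g \<in> carrier G"
    using assms by auto
  define m where "m = path_phi h al"
  have m: "m \<in> carrier G" using al h by (simp add: m_def)
  have avm: "av m u = av h u" using al h u by (simp add: m_def)
  let ?F = "\<lambda>b. Poly_Mapping.single (ck_tail (path_act h al) (m \<otimes> g) be b)
                  (path_c h al * c (m \<otimes> g) (ae (inv (m \<otimes> g)) b))"
  have "(\<Sum>a\<in>out_edges u. gen_act (GV v h) (Poly_Mapping.single (ck_tail al g be a) (c g (ae (inv g) a))))
      = (\<Sum>a\<in>out_edges u. ?F (ae m a))"
    using gen_act_GV_ck_tail[OF h g al _ v] by (simp add: m_def)
  also have "\<dots> = (\<Sum>b\<in>out_edges (av h u). ?F b)"
    using sum.reindex_bij_betw[OF bij_betw_ae_out_edges[OF m u]] by (simp add: avm)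
  finally have tails: "(\<Sum>a\<in>out_edges u.
      gen_act (GV v h) (Poly_Mapping.single (ck_tail al g be a) (c g (ae (inv g) a))))
      = (\<Sum>b\<in>out_edges (av h u). ?F b)" .
  have head: "gen_act (GV v h) (Poly_Mapping.single (Mon al u g be) 1) =
      Poly_Mapping.single (Mon (path_act h al) (av h u) (m \<otimes> g) be) (path_c h al)"
    using v h by (simp add: m_def)
  have "gen_act (GV v h) (ck_vec (Mon al u g be)) =
      Poly_Mapping.single (Mon (path_act h al) (av h u) (m \<otimes> g) be) (path_c h al)
      - (\<Sum>b\<in>out_edges (av h u). ?F b)"
    by (simp only: ck_vec.simps gen_act_diff gen_act_sum head tails)
  also have "\<dots> = pm_scale (path_c h al) (ck_vec (Mon (path_act h al) (av h u) (m \<otimes> g) be))"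
    by (simp add: ck_vec.simps pm_scale_diff_right pm_scale_sum)
  finally show ?thesis unfolding if_P[OF True] m_def .
qed

lemma gen_act_ck_vec_in_ck_span:
  assumes "ck_mono t"
  shows "gen_act x (ck_vec t) \<in> ck_span"
proof -
  obtain al u g be where t: "t = Mon al u g be" using assms by (cases t) auto
  have al: "set al \<subseteq> E" and u: "u \<in> V" and g: "g \<in> carrier G" and p: "path_to al u"
    and be: "set be \<subseteq> E" and reg: "regular_vertex E s u" using assms t by auto
  show ?thesis
  proof (cases x)
    case (GV v h)
    show ?thesis
    proof (cases "v \<in> V \<and> h \<in> carrier G \<and> v = av h (path_source al u)")
      case True
      then have "ck_mono (Mon (path_act h al) (av h u) (path_phi h al \<otimes> g) be)"
        using al u g p be reg by (auto simp: path_act_closed path_to_path_act regular_vertex_av)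
      then show ?thesis
        unfolding GV t gen_act_GV_ck_vec[OF assms[unfolded t]] if_P[OF True] by (rule ck_span.ck_vec)
    next
      case False
      show ?thesis
        unfolding GV t gen_act_GV_ck_vec[OF assms[unfolded t]] if_not_P[OF False] by (rule ck_span.zero)
    qed
  next
    case (GE e)
    then show ?thesis
      using gen_act_GE_ck_vec[of e al u g be] assms
      by (auto simp: t intro: ck_span.intros ck_vec_in_ck_span)
  next
    case (GS e)
    then show ?thesis
      using gen_act_GS_ck_vec_Nil gen_act_GS_ck_vec_Cons assms
      by (cases al) (auto simp: t intro: ck_span.intros ck_vec_in_ck_span)
  qed
qed

lemma falg_act_ck_span_closed: "x \<in> ck_span \<Longrightarrow> falg_act p x \<in> ck_span"
proof -
  assume x: "x \<in> ck_span"
  have "word_act w x \<in> ck_span" for w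
    using x by (induction w)
      (auto intro: pm_linear_ck_span_closed[OF pm_linear_gen_act gen_act_ck_vec_in_ck_span])
  then show ?thesis
    unfolding falg_act_def pm_extend_def by (intro ck_span_sum ck_span_scale)
qed

lemma sum_edge_ghost_act_Cons:
  assumes "finite (out_edges v)" "wf_mono (Mon (a # al) u k be)"
  shows "(\<Sum>e\<in>out_edges v. gen_act (GE e) (gen_act (GS e) (Poly_Mapping.single (Mon (a # al) u k be) 1))) =
    (if s a = v then Poly_Mapping.single (Mon (a # al) u k be) 1 else 0)"
proof -
  have "(\<Sum>e\<in>out_edges v. gen_act (GE e) (gen_act (GS e) (Poly_Mapping.single (Mon (a # al) u k be) 1))) =
      (\<Sum>e\<in>out_edges v. if e = a then Poly_Mapping.single (Mon (a # al) u k be) 1 else 0)"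
    using assms(2) by (intro sum.cong) auto
  also have "\<dots> = (if a \<in> out_edges v then Poly_Mapping.single (Mon (a # al) u k be) 1 else 0)"
    using assms(1) by (simp add: sum.delta')
  finally show ?thesis using assms(2) by auto
qed

lemma falg_act_ck_rel:
  assumes v: "v \<in> V" and reg: "regular_vertex E s v" and t: "wf_mono t"
  shows "falg_act (fgen (GV v \<one>) - (\<Sum>e\<in>out_edges v. fmul (fgen (GE e)) (fgen (GS e))))
           (Poly_Mapping.single t 1) \<in> ck_span"
proof -
  let ?lhs = "gen_act (GV v \<one>) (Poly_Mapping.single t 1) -
      (\<Sum>e\<in>out_edges v. gen_act (GE e) (gen_act (GS e) (Poly_Mapping.single t 1)))"
  have eq: "falg_act (fgen (GV v \<one>) - (\<Sum>e\<in>out_edges v. fmul (fgen (GE e)) (fgen (GS e))))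
           (Poly_Mapping.single t 1) = ?lhs"
    by (simp only: falg_act_diff falg_act_sum falg_act_fmul falg_act_fgen)
  consider (one) "t = Mon_one" | (vertex) k be where "t = Mon [] v k be"
    | (other) al u k be where "t = Mon al u k be" "al \<noteq> [] \<or> u \<noteq> v"
    by (cases t) auto
  then show ?thesis
  proof cases
    case one
    have "?lhs = ck_vec (Mon [] v \<one> [])"
      using one v by (simp add: ck_vec.simps ck_tail_def)
    moreover have "ck_mono (Mon [] v \<one> [])" using v reg by simp
    ultimately show ?thesis unfolding eq by (simp add: ck_vec_in_ck_span)
  next
    case (vertex k be)
    have "?lhs = ck_vec t"
      using vertex t by (simp add: ck_vec.simps ck_tail_def)
    moreover have "ck_mono t" using vertex t reg by simp
    ultimately show ?thesis unfolding eq by (simp add: ck_vec_in_ck_span)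
  next
    case (other al u k be)
    have "?lhs = 0"
    proof (cases al)
      case Nil
      with other t v show ?thesis by (auto intro!: sum.neutral)
    next
      case (Cons a al')
      with other t v show ?thesis
        using sum_edge_ghost_act_Cons[OF finite_out_edges[OF reg], of a al' u k be] by auto
    qed
    then show ?thesis unfolding eq by (simp add: ck_span.zero)
  qed
qed

lemma falg_act_ep_rel:
  assumes a: "a \<in> ep_rels G V E r s av ae \<phi> c" and n: "wf_vec n"
  shows "falg_act a n \<in> ck_span"
proof -
  have basis: "falg_act a (Poly_Mapping.single t 1) \<in> ck_span" if "wf_mono t" for t
    using a that unfolding ep_rels_def
    by (elim UnE CollectE exE conjE) (simp_all add: ck_span.zero falg_act_edge_rel falg_act_ghost_rel
        falg_act_ghost_edge_rel falg_act_vertex_vertex_rel falg_act_vertex_edge_rel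
        falg_act_ghost_vertex_rel falg_act_ck_rel)
  show ?thesis
    by (rule pm_linear_submodule_closed[OF pm_linear_falg_act])
      (use n basis in \<open>auto simp: wf_vec_def ck_span_scale intro: ck_span.intros\<close>)
qed

lemma falg_act_ep_ideal:
  assumes "a \<in> fideal (ep_rels G V E r s av ae \<phi> c)"
  shows "wf_vec n \<Longrightarrow> falg_act a n \<in> ck_span"
  using assms
proof (induction arbitrary: n rule: fideal.induct)
  case zero
  then show ?case by (simp add: ck_span.zero)
next
  case (base a)
  then show ?case by (rule falg_act_ep_rel)
next
  case (add a b)
  then show ?case by (simp add: falg_act_add ck_span.add)
next
  case (mult a x y)
  then show ?case by (simp add: falg_act_fmul falg_act_ck_span_closed wf_vec_falg_act)
qed

subsection \<open>Reading monomials with trivial group part as Leavitt words\<close>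

abbreviation LI :: "(('v, 'e) lgen, 'l) falg set" where
  "LI \<equiv> fideal (leavitt_rels V E r s)"

lemma leavitt_vertex_vertex:
  assumes "v \<in> V" "w \<in> V"
  shows "Poly_Mapping.single (A @ LV v # LV w # B) 1
      - (if v = w then Poly_Mapping.single (A @ LV v # B) (1::'l) else 0) \<in> LI"
proof -
  have "fmul (fgen (LV v)) (fgen (LV w)) - (if v = w then fgen (LV v) else 0) \<in> leavitt_rels V E r s"
    using assms unfolding leavitt_rels_def by blast
  from sandwich_in_fideal[OF this, of A B] show ?thesis
    by (cases "v = w") (simp_all add: pm_linear_diff[OF pm_linear_sandwich] fmul_fgen_fgen fgen_def)
qed

lemma leavitt_source_edge:
  assumes "e \<in> E"
  shows "Poly_Mapping.single (A @ LV (s e) # LE e # B) 1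
      - Poly_Mapping.single (A @ LE e # B) (1::'l) \<in> LI"
proof -
  have "fmul (fgen (LV (s e))) (fgen (LE e)) - fgen (LE e) \<in> leavitt_rels V E r s"
    using assms unfolding leavitt_rels_def by blast
  from sandwich_in_fideal[OF this, of A B] show ?thesis
    by (simp add: pm_linear_diff[OF pm_linear_sandwich] fmul_fgen_fgen fgen_def)
qed

lemma leavitt_edge_range:
  assumes "e \<in> E"
  shows "Poly_Mapping.single (A @ LE e # LV (r e) # B) 1
      - Poly_Mapping.single (A @ LE e # B) (1::'l) \<in> LI"
proof -
  have "fmul (fgen (LE e)) (fgen (LV (r e))) - fgen (LE e) \<in> leavitt_rels V E r s"
    using assms unfolding leavitt_rels_def by blast
  from sandwich_in_fideal[OF this, of A B] show ?thesis
    by (simp add: pm_linear_diff[OF pm_linear_sandwich] fmul_fgen_fgen fgen_def)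
qed

lemma leavitt_range_ghost:
  assumes "e \<in> E"
  shows "Poly_Mapping.single (A @ LV (r e) # LS e # B) 1
      - Poly_Mapping.single (A @ LS e # B) (1::'l) \<in> LI"
proof -
  have "fmul (fgen (LV (r e))) (fgen (LS e)) - fgen (LS e) \<in> leavitt_rels V E r s"
    using assms unfolding leavitt_rels_def by blast
  from sandwich_in_fideal[OF this, of A B] show ?thesis
    by (simp add: pm_linear_diff[OF pm_linear_sandwich] fmul_fgen_fgen fgen_def)
qed

lemma leavitt_ghost_source:
  assumes "e \<in> E"
  shows "Poly_Mapping.single (A @ LS e # LV (s e) # B) 1
      - Poly_Mapping.single (A @ LS e # B) (1::'l) \<in> LI"
proof -
  have "fmul (fgen (LS e)) (fgen (LV (s e))) - fgen (LS e) \<in> leavitt_rels V E r s"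
    using assms unfolding leavitt_rels_def by blast
  from sandwich_in_fideal[OF this, of A B] show ?thesis
    by (simp add: pm_linear_diff[OF pm_linear_sandwich] fmul_fgen_fgen fgen_def)
qed

lemma leavitt_ghost_edge:
  assumes "e \<in> E" "f \<in> E"
  shows "Poly_Mapping.single (A @ LS e # LE f # B) 1
      - (if e = f then Poly_Mapping.single (A @ LV (r e) # B) (1::'l) else 0) \<in> LI"
proof -
  have "fmul (fgen (LS e)) (fgen (LE f)) - (if e = f then fgen (LV (r e)) else 0) \<in> leavitt_rels V E r s"
    using assms unfolding leavitt_rels_def by blast
  from sandwich_in_fideal[OF this, of A B] show ?thesis
    by (cases "e = f") (simp_all add: pm_linear_diff[OF pm_linear_sandwich] fmul_fgen_fgen fgen_def)
qed

lemma leavitt_ck: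
  assumes "v \<in> V" "regular_vertex E s v"
  shows "Poly_Mapping.single (A @ LV v # B) 1
      - (\<Sum>e\<in>out_edges v. Poly_Mapping.single (A @ LE e # LS e # B) (1::'l)) \<in> LI"
proof -
  have "fgen (LV v) - (\<Sum>e\<in>out_edges v. fmul (fgen (LE e)) (fgen (LS e))) \<in> leavitt_rels V E r s"
    using assms unfolding leavitt_rels_def by blast
  from sandwich_in_fideal[OF this, of A B] show ?thesis
    by (simp add: pm_linear_diff[OF pm_linear_sandwich] pm_linear_sum[OF pm_linear_sandwich]
        fmul_fgen_fgen fgen_def)
qed

lemma leavitt_range_ghost_source:
  assumes "e \<in> E"
  shows "Poly_Mapping.single (A @ LV (r e) # LS e # B) 1
      - Poly_Mapping.single (A @ LS e # LV (s e) # B) (1::'l) \<in> LI"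
  using fideal_diff_trans[OF leavitt_range_ghost[OF assms]
      fideal_diff_sym[OF leavitt_ghost_source[OF assms]]]
  by simp

lemma leavitt_ghost_vertex_zero:
  assumes "e \<in> E" "u \<in> V" "u \<noteq> s e"
  shows "Poly_Mapping.single (A @ LS e # LV u # B) (1::'l) \<in> LI"
proof -
  have "Poly_Mapping.single (A @ LS e # LV (s e) # LV u # B) (1::'l)
      - Poly_Mapping.single (A @ LS e # LV u # B) 1 \<in> LI"
    using leavitt_ghost_source[OF assms(1), of A "LV u # B"] by simp
  moreover have "Poly_Mapping.single (A @ LS e # LV (s e) # LV u # B) (1::'l) \<in> LI"
    using leavitt_vertex_vertex[of "s e" u "A @ [LS e]" B] assms by simp
  ultimately show ?thesis by (rule fideal_diff_mem[OF fideal_diff_sym])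
qed

fun mono_word :: "('v, 'e, 'g) mono \<Rightarrow> ('v, 'e) lgen list" where
  "mono_word Mon_one = []"
| "mono_word (Mon al u g be) = map LE al @ LV u # map LS be"

fun trivial_grp :: "('v, 'e, 'g) mono \<Rightarrow> bool" where
  "trivial_grp Mon_one = True"
| "trivial_grp (Mon al u g be) = (g = \<one>)"

definition to_leavitt :: "(('v, 'e, 'g) mono \<Rightarrow>\<^sub>0 'l) \<Rightarrow> (('v, 'e) lgen, 'l) falg" where
  "to_leavitt = pm_extend (\<lambda>t. if trivial_grp t then Poly_Mapping.single (mono_word t) 1 else 0)"

lemma pm_linear_to_leavitt: "pm_linear to_leavitt"
  unfolding to_leavitt_def by (rule pm_linear_extend)

lemma to_leavitt_zero [simp]: "to_leavitt 0 = 0"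
  by (rule pm_linear_zero[OF pm_linear_to_leavitt])

lemma to_leavitt_single [simp]:
  "to_leavitt (Poly_Mapping.single t k) =
    (if trivial_grp t then Poly_Mapping.single (mono_word t) k else 0)"
  by (simp add: to_leavitt_def)

lemma leavitt_vertex_word_zero:
  assumes "wf_mono (Mon al u g be)" "v \<in> V" "v \<noteq> path_source al u"
  shows "Poly_Mapping.single (A @ LV v # mono_word (Mon al u g be)) (1::'l) \<in> LI"
proof (cases al)
  case Nil
  then show ?thesis using leavitt_vertex_vertex[of v u A "map LS be"] assms by simp
next
  case (Cons a al')
  let ?B = "map LE al' @ LV u # map LS be"
  have a: "a \<in> E" using assms Cons by simp
  have "Poly_Mapping.single (A @ LV v # LV (s a) # LE a # ?B) 1
      - Poly_Mapping.single (A @ LV v # LE a # ?B) (1::'l) \<in> LI"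
    using leavitt_source_edge[OF a, of "A @ [LV v]" ?B] by simp
  moreover have "Poly_Mapping.single (A @ LV v # LV (s a) # LE a # ?B) (1::'l) \<in> LI"
    using leavitt_vertex_vertex[of v "s a" A "LE a # ?B"] assms a Cons by simp
  ultimately have "Poly_Mapping.single (A @ LV v # LE a # ?B) (1::'l) \<in> LI"
    by (rule fideal_diff_mem[OF fideal_diff_sym])
  then show ?thesis using Cons by simp
qed

lemma leavitt_source_word:
  assumes "wf_mono (Mon al u g be)"
  shows "Poly_Mapping.single (A @ LV (path_source al u) # mono_word (Mon al u g be)) (1::'l)
      - Poly_Mapping.single (A @ mono_word (Mon al u g be)) 1 \<in> LI"
proof (cases al)
  case Nil
  then show ?thesis using leavitt_vertex_vertex[of u u A "map LS be"] assms by simp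
next
  case (Cons a al')
  then show ?thesis
    using assms leavitt_source_edge[of a A "map LE al' @ LV u # map LS be"] by simp
qed

lemma leavitt_edge_word_zero:
  assumes "wf_mono (Mon al u g be)" "e \<in> E" "r e \<noteq> path_source al u"
  shows "Poly_Mapping.single (A @ LE e # mono_word (Mon al u g be)) (1::'l) \<in> LI"
proof -
  have "Poly_Mapping.single (A @ LE e # LV (r e) # mono_word (Mon al u g be)) (1::'l)
      - Poly_Mapping.single (A @ LE e # mono_word (Mon al u g be)) 1 \<in> LI"
    using leavitt_edge_range[OF assms(2)] by simp
  moreover have "Poly_Mapping.single (A @ LE e # LV (r e) # mono_word (Mon al u g be)) (1::'l) \<in> LI"
    using leavitt_vertex_word_zero[OF assms(1) _ assms(3), of "A @ [LE e]"] assms(2) by simp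
  ultimately show ?thesis by (rule fideal_diff_mem[OF fideal_diff_sym])
qed

lemma to_leavitt_gen_act_vertex:
  assumes t: "wf_mono t" "trivial_grp t" and v: "v \<in> V"
  shows "to_leavitt (gen_act (GV v \<one>) (Poly_Mapping.single t 1))
      - Poly_Mapping.single (LV v # mono_word t) (1::'l) \<in> LI"
proof (cases t)
  case (Mon al u g be)
  show ?thesis
  proof (cases "v = path_source al u")
    case True
    then show ?thesis
      using fideal_diff_sym[OF leavitt_source_word[of al u g be "[]"]] t v Mon by simp
  next
    case False
    then show ?thesis
      using leavitt_vertex_word_zero[of al u g be v "[]"] t v Mon by simp
  qed
qed (use v in simp)

lemma to_leavitt_gen_act_edge:
  assumes t: "wf_mono t" "trivial_grp t" and e: "e \<in> E"
  shows "to_leavitt (gen_act (GE e) (Poly_Mapping.single t 1))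
      - Poly_Mapping.single (LE e # mono_word t) (1::'l) \<in> LI"
proof (cases t)
  case Mon_one
  then show ?thesis using e leavitt_edge_range[of e "[]" "[]"] by simp
next
  case (Mon al u g be)
  then show ?thesis
    using t e leavitt_edge_word_zero[of al u g be e "[]"] by (cases "r e = path_source al u") simp_all
qed

lemma to_leavitt_gen_act_ghost:
  assumes t: "wf_mono t" "trivial_grp t" and e: "e \<in> E"
  shows "to_leavitt (gen_act (GS e) (Poly_Mapping.single t 1))
      - Poly_Mapping.single (LS e # mono_word t) (1::'l) \<in> LI"
proof (cases t)
  case Mon_one
  then show ?thesis using e leavitt_range_ghost[of e "[]" "[]"] by simp
next
  case (Mon al u g be)
  then have g: "g = \<one>" and u: "u \<in> V" using t by auto
  show ?thesis
  proof (cases al)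
    case Nil
    show ?thesis
    proof (cases "u = s e")
      case True
      then show ?thesis using leavitt_range_ghost_source[OF e, of "[]"] e Mon Nil g by simp
    next
      case False
      then show ?thesis using leavitt_ghost_vertex_zero[OF e u False, of "[]"] e Mon Nil by simp
    qed
  next
    case (Cons a al')
    let ?t' = "Mon al' u g be"
    have a: "a \<in> E" and ra: "r a = path_source al' u" and t': "wf_mono ?t'"
      using t Mon Cons by auto
    show ?thesis
    proof (cases "e = a")
      case True
      have "Poly_Mapping.single (LS a # LE a # mono_word ?t') (1::'l)
          - Poly_Mapping.single (LV (r a) # mono_word ?t') 1 \<in> LI"
        using leavitt_ghost_edge[OF a a, of "[]" "mono_word ?t'"] by simp
      moreover have "Poly_Mapping.single (LV (r a) # mono_word ?t') (1::'l)
          - Poly_Mapping.single (mono_word ?t') 1 \<in> LI"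
        using leavitt_source_word[OF t', of "[]"] ra by simp
      ultimately have "Poly_Mapping.single (mono_word ?t') (1::'l)
          - Poly_Mapping.single (LS a # LE a # mono_word ?t') 1 \<in> LI"
        by (rule fideal_diff_sym[OF fideal_diff_trans])
      then show ?thesis using True Mon Cons g a by simp
    next
      case False
      then show ?thesis
        using leavitt_ghost_edge[OF e a, of "[]" "mono_word ?t'"] Mon Cons by simp
    qed
  qed
qed

lemma to_leavitt_gen_act_single:
  assumes "wf_mono t" "trivial_grp t" "x \<in> lgens V E"
  shows "to_leavitt (gen_act (canon G x) (Poly_Mapping.single t 1))
      - Poly_Mapping.single (x # mono_word t) (1::'l) \<in> LI"
proof -
  consider (vertex) v where "x = LV v" "v \<in> V" | (edge) e where "x = LE e" "e \<in> E"
    | (ghost) e where "x = LS e" "e \<in> E"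
    using assms(3) unfolding lgens_def by blast
  then show ?thesis
  proof cases
    case vertex
    then show ?thesis using to_leavitt_gen_act_vertex[OF assms(1,2)] by (simp only: canon.simps)
  next
    case edge
    then show ?thesis using to_leavitt_gen_act_edge[OF assms(1,2)] by (simp only: canon.simps)
  next
    case ghost
    then show ?thesis using to_leavitt_gen_act_ghost[OF assms(1,2)] by (simp only: canon.simps)
  qed
qed

lemma trivial_grp_gen_step:
  assumes "wf_mono t" "trivial_grp t" "x \<in> lgens V E" "snd (gen_step (canon G x) t) \<noteq> 0"
  shows "trivial_grp (fst (gen_step (canon G x) t))"
proof (cases t)
  case (Mon al u g be)
  with assms show ?thesis
    by (cases al) (auto simp: lgens_def split: if_splits)
qed (use assms in \<open>auto simp: lgens_def split: if_splits\<close>)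

definition wf_trivial_vec :: "(('v, 'e, 'g) mono \<Rightarrow>\<^sub>0 'l) \<Rightarrow> bool" where
  "wf_trivial_vec n \<longleftrightarrow> (\<forall>t\<in>Poly_Mapping.keys n. wf_mono t \<and> trivial_grp t)"

lemma wf_trivial_vec_gen_act:
  "wf_trivial_vec n \<Longrightarrow> x \<in> lgens V E \<Longrightarrow> wf_trivial_vec (gen_act (canon G x) n)"
  unfolding wf_trivial_vec_def by (metis keys_gen_act wf_mono_gen_step trivial_grp_gen_step)

lemma to_leavitt_gen_act:
  assumes n: "wf_trivial_vec n" and x: "x \<in> lgens V E"
  shows "to_leavitt (gen_act (canon G x) n) - fmul (fgen x) (to_leavitt n) \<in> LI"
proof -
  have "pm_linear (\<lambda>n. to_leavitt (gen_act (canon G x) n) - fmul (fgen x) (to_leavitt n))"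
    by (intro pm_linear_fun_diff pm_linear_comp[OF pm_linear_to_leavitt pm_linear_gen_act]
        pm_linear_comp[OF pm_linear_fmul_right pm_linear_to_leavitt])
  then show ?thesis
  proof (rule pm_linear_submodule_closed)
    fix t assume "t \<in> Poly_Mapping.keys n"
    then have "wf_mono t" "trivial_grp t" using n unfolding wf_trivial_vec_def by auto
    then show "to_leavitt (gen_act (canon G x) (Poly_Mapping.single t 1))
        - fmul (fgen x) (to_leavitt (Poly_Mapping.single t 1)) \<in> LI"
      using to_leavitt_gen_act_single[OF _ _ x] by (simp add: fmul_fgen_single)
  qed (auto intro: fideal.add fideal_pm_scale)
qed

lemma to_leavitt_word_act:
  assumes "set w \<subseteq> lgens V E"
  shows "wf_trivial_vec (word_act (map (canon G) w) (Poly_Mapping.single Mon_one 1)) \<and>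
    to_leavitt (word_act (map (canon G) w) (Poly_Mapping.single Mon_one 1))
      - Poly_Mapping.single w 1 \<in> LI"
  using assms
proof (induction w)
  case Nil
  then show ?case by (simp add: wf_trivial_vec_def fideal.zero)
next
  case (Cons x w)
  let ?n = "word_act (map (canon G) w) (Poly_Mapping.single Mon_one 1)"
  have x: "x \<in> lgens V E" and IH: "wf_trivial_vec ?n" "to_leavitt ?n - Poly_Mapping.single w 1 \<in> LI"
    using Cons by auto
  have "fmul (fmul (fgen x) (to_leavitt ?n - Poly_Mapping.single w 1)) (Poly_Mapping.single [] 1) \<in> LI"
    by (rule fideal.mult[OF IH(2)])
  then have "fmul (fgen x) (to_leavitt ?n) - Poly_Mapping.single (x # w) 1 \<in> LI"
    by (simp add: pm_linear_diff[OF pm_linear_fmul_right] fmul_fgen_single)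
  then have "to_leavitt (gen_act (canon G x) ?n) - Poly_Mapping.single (x # w) 1 \<in> LI"
    by (rule fideal_diff_trans[OF to_leavitt_gen_act[OF IH(1) x]])
  then show ?case using wf_trivial_vec_gen_act[OF IH(1) x] by simp
qed

lemma wf_trivial_vec_pm_extend:
  "(\<And>u. u \<in> Poly_Mapping.keys p \<Longrightarrow> wf_trivial_vec (b u)) \<Longrightarrow> wf_trivial_vec (pm_extend b p)"
  unfolding wf_trivial_vec_def using keys_pm_extend by fastforce

subsection \<open>Cuntz--Krieger combinations supported on the trivial group\<close>

lemma ck_span_finite_combination:
  assumes "x \<in> ck_span"
  shows "\<exists>S coef. finite S \<and> (\<forall>t\<in>S. ck_mono t) \<and> x = (\<Sum>t\<in>S. pm_scale (coef t) (ck_vec t))"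
  using assms
proof induction
  case zero
  then show ?case by (intro exI[of _ "{}"]) simp
next
  case (ck_vec t k)
  then show ?case by (intro exI[of _ "{t}"] exI[of _ "\<lambda>_. k"]) simp
next
  case (add x y)
  then obtain S1 coef1 S2 coef2
    where S1: "finite S1" "\<forall>t\<in>S1. ck_mono t" "x = (\<Sum>t\<in>S1. pm_scale (coef1 t) (ck_vec t))"
      and S2: "finite S2" "\<forall>t\<in>S2. ck_mono t" "y = (\<Sum>t\<in>S2. pm_scale (coef2 t) (ck_vec t))"
    by blast
  define coef where "coef t = (if t \<in> S1 then coef1 t else 0) + (if t \<in> S2 then coef2 t else 0)" for t
  have "(\<Sum>t\<in>S1 \<union> S2. pm_scale (if t \<in> S1 then coef1 t else 0) (ck_vec t)) = x"
    "(\<Sum>t\<in>S1 \<union> S2. pm_scale (if t \<in> S2 then coef2 t else 0) (ck_vec t)) = y"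
    using S1 S2 by (auto intro!: sum.mono_neutral_cong_right)
  then have "x + y = (\<Sum>t\<in>S1 \<union> S2. pm_scale (coef t) (ck_vec t))"
    by (simp add: coef_def pm_scale_add_left sum.distrib)
  then show ?case using S1 S2 by (intro exI[of _ "S1 \<union> S2"] exI[of _ coef]) auto
qed

lemma lookup_ck_vec:
  "Poly_Mapping.lookup (ck_vec (Mon al u g be)) t' =
    (if t' = Mon al u g be then 1 else 0)
    - (\<Sum>e\<in>out_edges u. if t' = ck_tail al g be e then c g (ae (inv g) e) else 0)"
  by (simp add: ck_vec.simps lookup_minus lookup_sum lookup_single when_def eq_commute)

lemma lookup_ck_vec_self: "Poly_Mapping.lookup (ck_vec (Mon al u g be)) (Mon al u g be) = 1"
proof -
  have "(\<Sum>e\<in>out_edges u. if Mon al u g be = ck_tail al g be e then c g (ae (inv g) e) else 0) = 0"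
    by (rule sum.neutral) (auto simp: ck_tail_def)
  then show ?thesis unfolding lookup_ck_vec by simp
qed

lemma lookup_ck_vec_other:
  assumes "Poly_Mapping.lookup (ck_vec (Mon al u g be)) t' \<noteq> 0" "t' \<noteq> Mon al u g be"
  shows "\<exists>e\<in>out_edges u. t' = ck_tail al g be e"
proof (rule ccontr)
  assume "\<not> ?thesis"
  then have "(\<Sum>e\<in>out_edges u. if t' = ck_tail al g be e then c g (ae (inv g) e) else 0) = 0"
    by (intro sum.neutral) auto
  then show False using assms unfolding lookup_ck_vec by simp
qed

fun mono_length :: "('v, 'e, 'g) mono \<Rightarrow> nat" where
  "mono_length Mon_one = 0"
| "mono_length (Mon al u g be) = length al"

text \<open>A shortest \<open>t\<close> with \<open>coef t \<noteq> 0\<close> and nontrivial group part would survive in the combination: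
  any other \<open>ck_vec t'\<close> contains \<open>t\<close> only as a tail of the shorter \<open>t'\<close>, and tails of
  monomials with trivial group part have trivial group part.\<close>

lemma ck_combination_trivial_grp:
  assumes S: "finite S" "\<forall>t\<in>S. ck_mono t" and x: "x = (\<Sum>t\<in>S. pm_scale (coef t) (ck_vec t))"
    and keys: "\<forall>t\<in>Poly_Mapping.keys x. trivial_grp t"
    and t: "t \<in> S" "coef t \<noteq> 0"
  shows "trivial_grp t"
proof (rule ccontr)
  assume "\<not> trivial_grp t"
  let ?B = "{t\<in>S. coef t \<noteq> 0 \<and> \<not> trivial_grp t}"
  obtain t0 where t0: "t0 \<in> ?B" and shortest: "\<And>t. t \<in> ?B \<Longrightarrow> mono_length t0 \<le> mono_length t"
    using ex_has_least_nat[of "\<lambda>t. t \<in> ?B" t mono_length] t \<open>\<not> trivial_grp t\<close> by auto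
  then obtain al0 u0 g0 be0 where T0: "t0 = Mon al0 u0 g0 be0" and g0: "g0 \<noteq> \<one>"
    using S by (cases t0) auto
  have others: "coef t' * Poly_Mapping.lookup (ck_vec t') t0 = 0" if t': "t' \<in> S" "t' \<noteq> t0" for t'
  proof (rule ccontr)
    assume "coef t' * Poly_Mapping.lookup (ck_vec t') t0 \<noteq> 0"
    then have "coef t' \<noteq> 0" and lookup: "Poly_Mapping.lookup (ck_vec t') t0 \<noteq> 0" by auto
    obtain al u g be where T: "t' = Mon al u g be" using t' S by (cases t') auto
    obtain e where e: "e \<in> out_edges u" and tail: "t0 = ck_tail al g be e"
      using lookup_ck_vec_other[of al u g be t0] lookup t' T by auto
    show False
    proof (cases "g = \<one>")
      case True
      then show False using tail T0 e g0 by (simp add: ck_tail_def)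
    next
      case False
      then have "t' \<in> ?B" using t' \<open>coef t' \<noteq> 0\<close> T by simp
      moreover have "mono_length t0 = Suc (mono_length t')" using tail T by (simp add: ck_tail_def)
      ultimately show False using shortest by fastforce
    qed
  qed
  have "Poly_Mapping.lookup x t0 = (\<Sum>t\<in>S. coef t * Poly_Mapping.lookup (ck_vec t) t0)"
    by (simp add: x lookup_sum)
  also have "\<dots> = (\<Sum>t\<in>{t0}. coef t * Poly_Mapping.lookup (ck_vec t) t0)"
    using S(1) t0 others by (intro sum.mono_neutral_right) auto
  also have "\<dots> = coef t0" by (simp add: T0 lookup_ck_vec_self)
  finally have "t0 \<in> Poly_Mapping.keys x" using t0 by (simp add: in_keys_iff)
  then show False using keys t0 by blast
qed

lemma to_leavitt_ck_vec:
  assumes "ck_mono (Mon al u \<one> be)"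
  shows "to_leavitt (ck_vec (Mon al u \<one> be)) \<in> LI"
proof -
  have u: "u \<in> V" and reg: "regular_vertex E s u" using assms by auto
  let ?A = "map LE al" and ?B = "map LS be"
  have "to_leavitt (ck_vec (Mon al u \<one> be)) = Poly_Mapping.single (?A @ LV u # ?B) 1
      - (\<Sum>e\<in>out_edges u. Poly_Mapping.single (?A @ LE e # LV (r e) # LS e # ?B) 1)"
    by (simp add: ck_vec.simps pm_linear_diff[OF pm_linear_to_leavitt]
        pm_linear_sum[OF pm_linear_to_leavitt] ck_tail_def)
  also have "\<dots> = (Poly_Mapping.single (?A @ LV u # ?B) 1
        - (\<Sum>e\<in>out_edges u. Poly_Mapping.single (?A @ LE e # LS e # ?B) 1))
      - (\<Sum>e\<in>out_edges u. Poly_Mapping.single (?A @ LE e # LV (r e) # LS e # ?B) 1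
        - Poly_Mapping.single (?A @ LE e # LS e # ?B) 1)"
    by (simp add: sum_subtractf)
  also have "\<dots> \<in> LI"
    by (intro fideal_diff fideal_sum leavitt_ck[OF u reg] leavitt_edge_range) simp
  finally show ?thesis .
qed

lemma to_leavitt_ck_span:
  assumes x: "x \<in> ck_span" and keys: "\<forall>t\<in>Poly_Mapping.keys x. trivial_grp t"
  shows "to_leavitt x \<in> LI"
proof -
  obtain S coef where S: "finite S" "\<forall>t\<in>S. ck_mono t" and x_eq: "x = (\<Sum>t\<in>S. pm_scale (coef t) (ck_vec t))"
    using ck_span_finite_combination[OF x] by blast
  have "to_leavitt x = (\<Sum>t\<in>S. pm_scale (coef t) (to_leavitt (ck_vec t)))"
    by (simp add: x_eq pm_linear_sum[OF pm_linear_to_leavitt] pm_linear_scale[OF pm_linear_to_leavitt])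
  also have "\<dots> \<in> LI"
  proof (rule fideal_sum)
    fix t assume t: "t \<in> S"
    show "pm_scale (coef t) (to_leavitt (ck_vec t)) \<in> LI"
    proof (cases "coef t = 0")
      case False
      then have "trivial_grp t" by (rule ck_combination_trivial_grp[OF S x_eq keys t])
      moreover have "ck_mono t" using S t by blast
      ultimately obtain al u be where "t = Mon al u \<one> be" by (cases t) auto
      then show ?thesis using to_leavitt_ck_vec \<open>ck_mono t\<close> by (simp add: fideal_pm_scale)
    qed simp
  qed
  finally show ?thesis .
qed

end

theorem proposition3p9:
  fixes G :: "'g monoid" and V :: "'v set" and E :: "'e set" and r s :: "'e \<Rightarrow> 'v"
    and av :: "'g \<Rightarrow> 'v \<Rightarrow> 'v" and ae :: "'g \<Rightarrow> 'e \<Rightarrow> 'e" and \<phi> :: "'g \<Rightarrow> 'e \<Rightarrow> 'g"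
    and c :: "'g \<Rightarrow> 'e \<Rightarrow> 'l::comm_ring_1"
    and p :: "(('v, 'e) lgen, 'l) falg"
  assumes "twisted_EP_tuple G V E r s av ae \<phi> c"
    and "\<forall>u\<in>Poly_Mapping.keys p. set u \<subseteq> lgens V E"
    and "fmap (canon G) p \<in> fideal (ep_rels G V E r s av ae \<phi> c)"
  shows "p \<in> fideal (leavitt_rels V E r s)"
proof -
  interpret twisted_EP G V E r s av ae \<phi> c
    using assms(1)
    by (intro twisted_EP.intro) (simp_all add: twisted_EP_axioms_def twisted_EP_tuple_def)
  let ?w = "\<lambda>u. word_act (map (canon G) u) (Poly_Mapping.single Mon_one 1)"
  let ?n = "falg_act (fmap (canon G) p) (Poly_Mapping.single Mon_one 1)"
  have words: "wf_trivial_vec (?w u)" "to_leavitt (?w u) - Poly_Mapping.single u 1 \<in> LI"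
    if "u \<in> Poly_Mapping.keys p" for u
    using to_leavitt_word_act assms(2) that by blast+
  have n: "?n = pm_extend ?w p" by (rule falg_act_fmap_canon)
  have "?n \<in> ck_span" by (rule falg_act_ep_ideal[OF assms(3)]) (simp add: wf_vec_def)
  moreover have "wf_trivial_vec ?n" unfolding n by (rule wf_trivial_vec_pm_extend[OF words(1)])
  ultimately have "to_leavitt ?n \<in> LI"
    by (intro to_leavitt_ck_span) (auto simp: wf_trivial_vec_def)
  moreover have "to_leavitt ?n - p = pm_extend (\<lambda>u. to_leavitt (?w u) - Poly_Mapping.single u 1) p"
    unfolding n pm_linear_pm_extend[OF pm_linear_to_leavitt] pm_extend_basis_diff by simp
  then have "to_leavitt ?n - p \<in> LI"
    unfolding pm_extend_def by (simp add: fideal_sum fideal_pm_scale words(2))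
  ultimately have "to_leavitt ?n - (to_leavitt ?n - p) \<in> LI" by (rule fideal_diff)
  then show ?thesis by simp
qed

end
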